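(* Let $N\ge 1$ be an odd integer and let $q_0,p_0$ be odd, relatively prime positive integers with either $p_0>q_0>0$ or $p_0=q_0=1$; put $q=p_0/q_0$. For integers $a,b$ and $N$ define $H(N,a,b)=\{(R(a\theta),R(b\theta+2\pi i/N)):\theta\in\mathbb{R},\ i\in\{0,\dots,N-1\}\}\subset \mathrm{SO}(2)\times\mathrm{SO}(2)$. Then each of the four groups below has nonzero fixed vectors in $L^2(\mathcal P,\lambda,\mathbb{R})$ under the action $T'$; more precisely, in angular coordinates $(\rho,\sigma)$, the space of $\phi\in L^2(\mathcal P,\lambda,\mathbb{R})$ fixed by the group is, almost everywhere, exactly the set of functions of the stated form, where $\vartheta$ ranges over real functions on $\mathbb{R}$ satisfying $\vartheta(u+\frac{2\pi}{q_0N'})=-\vartheta(u)$ for all $u$ and square-integrable on $[0,\frac{2\pi}{q_0N'}]$; consequently this space is isomorphic, as a Hilbert space, to $L^2([0,\frac{2\pi}{q_0N'}],du,\mathbb{R})$ (square-integrable functions with respect to Lebesgue measure on the arc $v_i=0$, $0\le u_i\le \frac{2\pi}{q_0N'}$): (1) for $H(N,q_0,p_0)$: $\phi(\rho,\sigma)=\varsigma(-\rho/2)\varsigma(\sigma/2)\vartheta(\sigma-q\rho)$, with $N'=N/\gcd(N,q_0)$; (2) for $H(N,p_0,q_0)$: $\phi(\rho,\sigma)=\varsigma(-\sigma/2)\varsigma(\rho/2)\vartheta(\rho-q\sigma)$, with $N'=N/\gcd(N,p_0)$; (3) for $H(N,-q_0,p_0)$: $\phi(\rho,\sigma)=\varsigma(\sigma/2)\varsigma(\rho/2)\vartheta(\sigma+q\rho)$,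 with $N'=N/\gcd(N,q_0)$; (4) for $H(N,-p_0,q_0)$: $\phi(\rho,\sigma)=\varsigma(\sigma/2)\varsigma(\rho/2)\vartheta(-\rho-q\sigma)$, with $N'=N/\gcd(N,p_0)$.
   Context: $R(\theta)=\begin{pmatrix}\cos\theta & \sin\theta\\ -\sin\theta & \cos\theta\end{pmatrix}$. Let $P_1(\mathbb{R})=\mathbb{R}\cup\{\infty\}$ and $\mathcal P=P_1(\mathbb{R})\times P_1(\mathbb{R})$, with projective coordinates $(x,y)$ and angular coordinates $(\rho,\sigma)$ given by $x=\cot(\rho/2)$, $y=\cot(\sigma/2)$; functions on $\mathcal P$ are thus functions of $(\rho,\sigma)$ that are $2\pi$-periodic in each variable. $\lambda$ is the $\mathrm{SO}(2)\times\mathrm{SO}(2)$-invariant (Lebesgue) measure $d\rho\,d\sigma$ and $L^2(\mathcal P,\lambda,\mathbb{R})$ the real Hilbert space of square-integrable real functions on $\mathcal P$. For $g=\begin{pmatrix}a&b\\c&d\end{pmatrix}\in\mathrm{SL}(2,\mathbb{R})$: $xg=\frac{xa+c}{xb+d}$, $k_g(x)=\left(\frac{(xb+d)^2+(xa+c)^2}{1+x^2}\right)^{1/2}$, $s_g(x)=\frac{xb+d}{|xb+d|}$, and $(T'(g,h)\phi)(x,y)=k_g^{-3}(x)s_g(x)k_h^{-3}(y)s_h(y)\phi(xg,yh)$. A function $\phi$ is fixed by a subgroup $S$ if $T'(s)\phi=\phi$ in $L^2$ for all $s\in S$. $\varsigma(t)$ denotes the sign of $\sin t$. *)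

theory Defs
  imports "HOL-Analysis.Analysis"
begin

definition mat22 :: "real \<Rightarrow> real \<Rightarrow> real \<Rightarrow> real \<Rightarrow> real^2^2" where
  "mat22 a b c d = (\<chi> i j. if i = 1 then (if j = 1 then a else b) else (if j = 1 then c else d))"

definition Rot :: "real \<Rightarrow> real^2^2" where
  "Rot \<theta> = mat22 (cos \<theta>) (sin \<theta>) (- sin \<theta>) (cos \<theta>)"

text \<open>Right action x g = (x a + c)/(x b + d) on projective coordinates (finite part).\<close>
definition proj_act :: "real^2^2 \<Rightarrow> real \<Rightarrow> real" where
  "proj_act g x = (x * g$1$1 + g$2$1) / (x * g$1$2 + g$2$2)"

definition kfac :: "real^2^2 \<Rightarrow> real \<Rightarrow> real" where
  "kfac g x = sqrt (((x * g$1$2 + g$2$2)^2 + (x * g$1$1 + g$2$1)^2) / (1 + x^2))"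

definition sfac :: "real^2^2 \<Rightarrow> real \<Rightarrow> real" where
  "sfac g x = (x * g$1$2 + g$2$2) / \<bar>x * g$1$2 + g$2$2\<bar>"

text \<open>Angular coordinate of a finite projective point: the unique \<rho> in (0, 2 pi) with x = cot(\<rho>/2).\<close>
definition ang :: "real \<Rightarrow> real" where
  "ang x = pi - 2 * arctan x"

text \<open>The action T'(g,h) written in angular coordinates (\<rho>,\<sigma>), x = cot(\<rho>/2), y = cot(\<sigma>/2).
  Functions on P are represented by functions of (\<rho>,\<sigma>) that are 2 pi periodic in each variable.\<close>
definition Tp :: "(real^2^2) \<times> (real^2^2) \<Rightarrow> (real \<times> real \<Rightarrow> real) \<Rightarrow> real \<times> real \<Rightarrow> real" where
  "Tp gh \<phi> = (\<lambda>(\<rho>, \<sigma>).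
     (let g = fst gh; h = snd gh; x = cot (\<rho> / 2); y = cot (\<sigma> / 2) in
       inverse (kfac g x ^ 3) * sfac g x * inverse (kfac h y ^ 3) * sfac h y
         * \<phi> (ang (proj_act g x), ang (proj_act h y))))"

text \<open>Fundamental domain of P in angular coordinates, with Lebesgue measure d\<rho> d\<sigma>.\<close>
definition Pbox :: "(real \<times> real) set" where
  "Pbox = {0 .. 2 * pi} \<times> {0 .. 2 * pi}"

text \<open>(Representatives of) elements of L^2(P, \<lambda>, R).\<close>
definition L2P :: "(real \<times> real \<Rightarrow> real) \<Rightarrow> bool" where
  "L2P \<phi> \<longleftrightarrow> (\<forall>\<rho> \<sigma>. \<phi> (\<rho> + 2 * pi, \<sigma>) = \<phi> (\<rho>, \<sigma>) \<and> \<phi> (\<rho>, \<sigma> + 2 * pi) = \<phi> (\<rho>, \<sigma>))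
     \<and> \<phi> \<in> borel_measurable lborel \<and> set_integrable lborel Pbox (\<lambda>p. (\<phi> p)^2)"

definition fixed_by :: "((real^2^2) \<times> (real^2^2)) set \<Rightarrow> (real \<times> real \<Rightarrow> real) \<Rightarrow> bool" where
  "fixed_by S \<phi> \<longleftrightarrow> (\<forall>s\<in>S. AE p in lborel. p \<in> Pbox \<longrightarrow> Tp s \<phi> p = \<phi> p)"

definition H :: "int \<Rightarrow> int \<Rightarrow> int \<Rightarrow> ((real^2^2) \<times> (real^2^2)) set" where
  "H N a b = {(Rot (of_int a * \<theta>), Rot (of_int b * \<theta> + 2 * pi * of_int i / of_int N)) | \<theta> i.
               i \<in> {0 .. N - 1}}"

definition vsig :: "real \<Rightarrow> real" where
  "vsig t = sgn (sin t)"

definition admissible :: "real \<Rightarrow> (real \<Rightarrow> real) \<Rightarrow> bool" where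
  "admissible L \<Theta> \<longleftrightarrow> (\<forall>u. \<Theta> (u + L) = - \<Theta> u)
     \<and> \<Theta> \<in> borel_measurable lborel \<and> set_integrable lborel {0 .. L} (\<lambda>u. (\<Theta> u)^2)"

text \<open>The conclusion for one group G, period L and form F (\<Theta> \<mapsto> \<phi>):
  (i) there are nonzero fixed vectors;
  (ii) every fixed L^2 vector is a.e. of the form F \<Theta> with \<Theta> admissible;
  (iii) every F \<Theta> with \<Theta> admissible is a fixed L^2 vector;
  (iv)/(v) the (linear) map \<Theta> \<mapsto> F \<Theta> is, up to a positive constant factor, isometric from
  L^2([0,L]) and every element of L^2([0,L]) is the restriction of an admissible \<Theta>;
  hence the fixed space is isomorphic as a Hilbert space to L^2([0,L], du).\<close>
definition fixed_space_char ::
  "((real^2^2) \<times> (real^2^2)) set \<Rightarrow> real \<Rightarrow> ((real \<Rightarrow> real) \<Rightarrow> real \<times> real \<Rightarrow> real) \<Rightarrow> bool" where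
  "fixed_space_char G L F \<longleftrightarrow>
     (\<exists>\<phi>. L2P \<phi> \<and> fixed_by G \<phi> \<and> \<not> (AE p in lborel. p \<in> Pbox \<longrightarrow> \<phi> p = 0))
   \<and> (\<forall>\<phi>. L2P \<phi> \<and> fixed_by G \<phi> \<longrightarrow>
         (\<exists>\<Theta>. admissible L \<Theta> \<and> (AE p in lborel. p \<in> Pbox \<longrightarrow> \<phi> p = F \<Theta> p)))
   \<and> (\<forall>\<Theta>. admissible L \<Theta> \<longrightarrow> L2P (F \<Theta>) \<and> fixed_by G (F \<Theta>))
   \<and> (\<exists>c>0. \<forall>\<Theta>. admissible L \<Theta> \<longrightarrow>
         set_lebesgue_integral lborel Pbox (\<lambda>p. (F \<Theta> p)^2)
           = c * set_lebesgue_integral lborel {0 .. L} (\<lambda>u. (\<Theta> u)^2))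
   \<and> (\<forall>f. f \<in> borel_measurable lborel \<and> set_integrable lborel {0 .. L} (\<lambda>u. (f u)^2) \<longrightarrow>
         (\<exists>\<Theta>. admissible L \<Theta> \<and> (AE u in lborel. u \<in> {0 .. L} \<longrightarrow> \<Theta> u = f u)))"

end

theory Submission
  imports Defs
begin

(* In angular coordinates a pair of rotations (R(u), R(w)) acts on \<phi> by the translation
   (\<rho>, \<sigma>) \<mapsto> (\<rho> + 2u, \<sigma> + 2w) up to the sign factors \<varsigma>. After the twist
   \<psi> = \<varsigma>(\<rho>/2) \<varsigma>(\<sigma>/2) \<phi>, which turns 2\<pi>-periodicity into antiperiodicity, a fixed vector of
   H(N,a,b) is a \<psi> that is a.e. invariant under the translations (2a\<theta>, 2b\<theta> + 4\<pi>i/N).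
   Invariance along the direction (a,b) forces \<psi> to be a.e. a function h of a linear form
   \<alpha>\<rho> + \<beta>\<sigma> vanishing on that direction. The antiperiodicity of \<psi> and the discrete translation make
   h a.e. antiperiodic under 2\<pi>\<alpha>, 2\<pi>\<beta> and periodic under 4\<pi>\<beta>/N; these are odd, odd and even
   multiples of L = 2\<pi>/(q0 N') generating L\<int>, hence h(u + L) = -h(u). Conversely every
   L-antiperiodic \<Theta> gives a fixed vector, and Fubini along the lines \<alpha>\<rho> + \<beta>\<sigma> = const shows that
   its L^2 norm on the torus is a fixed multiple of the L^2 norm of \<Theta> on [0, L]. *)

section \<open>Rotations in angular coordinates\<close>

lemma Rot_nth [simp]:
  "Rot s $1$1 = cos s" "Rot s $1$2 = sin s" "Rot s $2$1 = - sin s" "Rot s $2$2 = cos s"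
  by (simp_all add: Rot_def mat22_def)

lemma kfac_Rot [simp]: "kfac (Rot s) x = 1"
proof -
  have "(x * sin s + cos s)^2 + (x * cos s - sin s)^2 = (1 + x^2) * ((sin s)^2 + (cos s)^2)"
    by algebra
  also have "\<dots> = 1 + x^2" by simp
  finally have "(x * sin s + cos s)^2 + (x * cos s - sin s)^2 = 1 + x^2" .
  moreover have "1 + x^2 \<noteq> 0" by (smt (verit) zero_le_power2)
  ultimately show ?thesis by (simp add: kfac_def)
qed

lemma proj_act_Rot_cot:
  assumes "sin r \<noteq> 0"
  shows "proj_act (Rot s) (cot r) = cot (r + s)"
proof -
  have "cot r * cos s - sin s = cos (r + s) / sin r"
    using assms by (simp add: cot_def cos_add field_simps)
  moreover have "cot r * sin s + cos s = sin (r + s) / sin r"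
    using assms by (simp add: cot_def sin_add field_simps)
  ultimately show ?thesis
    using assms by (simp add: proj_act_def cot_def)
qed

lemma sfac_Rot_cot:
  assumes "sin r \<noteq> 0"
  shows "sfac (Rot s) (cot r) = vsig (r + s) * vsig r"
proof -
  have "cot r * sin s + cos s = sin (r + s) / sin r"
    using assms by (simp add: cot_def sin_add field_simps)
  then have "sfac (Rot s) (cot r) = sgn (sin (r + s) / sin r)"
    by (simp add: sfac_def real_sgn_eq)
  also have "\<dots> = vsig (r + s) * vsig r"
    using assms unfolding vsig_def sgn_divide by (cases "sin r > 0") (auto simp: sgn_if)
  finally show ?thesis .
qed

lemma ang_cot:
  assumes "sin y \<noteq> 0"
  shows "ang (cot y) = 2 * y - 2 * pi * of_int \<lfloor>y / pi\<rfloor>"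
proof -
  define k where "k = \<lfloor>y / pi\<rfloor>"
  define y' where "y' = y - pi * of_int k"
  have "of_int k \<le> y / pi" "y / pi < of_int k + 1" unfolding k_def by linarith+
  then have y'_bounds: "0 \<le> y'" "y' < pi" unfolding y'_def by (simp_all add: field_simps)
  have y_eq: "y = y' + of_int k * pi" unfolding y'_def by simp
  have "sin y' \<noteq> 0"
  proof
    assume "sin y' = 0"
    then obtain i :: int where "y' = of_int i * pi" by (auto simp: sin_zero_iff_int2)
    then have "y = of_int (i + k) * pi" using y_eq by (simp add: algebra_simps)
    then show False using assms by (metis sin_zero_iff_int2)
  qed
  with y'_bounds have "0 < y'" by (metis order_le_less sin_zero)
  have "arctan (cot y') = pi / 2 - y'"
    using \<open>0 < y'\<close> y'_bounds by (intro arctan_tan [of "pi / 2 - y'", unfolded tan_cot']) auto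
  moreover have "cot y = cot y'" unfolding y_eq cot_altdef by simp
  ultimately show ?thesis unfolding ang_def y'_def k_def by (simp add: algebra_simps)
qed

lemma periodic_of_int:
  fixes f :: "real \<Rightarrow> 'a"
  assumes "\<And>x. f (x + c) = f x"
  shows "f (x + of_int j * c) = f x"
proof -
  have nat_case: "f (y + real n * c) = f y" for y n
  proof (induction n arbitrary: y)
    case (Suc n)
    have "y + real (Suc n) * c = (y + c) + real n * c" by (simp add: algebra_simps)
    then show ?case using Suc.IH[of "y + c"] assms[of y] by metis
  qed simp
  show ?thesis
  proof (cases "j \<ge> 0")
    case True
    then show ?thesis using nat_case[of x "nat j"] by simp
  next
    case False
    then have "f (x + of_int j * c) = f (x + of_int j * c + real (nat (- j)) * c)"
      using nat_case by metis
    also have "\<dots> = f x" using False by simp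
    finally show ?thesis .
  qed
qed

definition doubly_periodic :: "(real \<times> real \<Rightarrow> 'a) \<Rightarrow> bool" where
  "doubly_periodic \<phi> \<longleftrightarrow>
     (\<forall>\<rho> \<sigma>. \<phi> (\<rho> + 2 * pi, \<sigma>) = \<phi> (\<rho>, \<sigma>) \<and> \<phi> (\<rho>, \<sigma> + 2 * pi) = \<phi> (\<rho>, \<sigma>))"

lemma L2P_doubly_periodic: "L2P \<phi> \<Longrightarrow> doubly_periodic \<phi>"
  by (simp add: L2P_def doubly_periodic_def)

lemma doubly_periodic_of_int:
  assumes "doubly_periodic \<phi>"
  shows "\<phi> (\<rho> + of_int j * (2 * pi), \<sigma> + of_int k * (2 * pi)) = \<phi> (\<rho>, \<sigma>)"
proof -
  have "\<phi> (\<rho> + of_int j * (2 * pi), \<sigma> + of_int k * (2 * pi)) = \<phi> (\<rho>, \<sigma> + of_int k * (2 * pi))"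
    using periodic_of_int[of "\<lambda>x. \<phi> (x, \<sigma> + of_int k * (2 * pi))"] assms
    unfolding doubly_periodic_def by blast
  also have "\<dots> = \<phi> (\<rho>, \<sigma>)"
    using periodic_of_int[of "\<lambda>x. \<phi> (\<rho>, x)"] assms unfolding doubly_periodic_def by blast
  finally show ?thesis .
qed

lemma Tp_Rot:
  assumes "doubly_periodic \<phi>"
    and "sin (\<rho> / 2) \<noteq> 0" "sin (\<sigma> / 2) \<noteq> 0" "sin (\<rho> / 2 + u) \<noteq> 0" "sin (\<sigma> / 2 + w) \<noteq> 0"
  shows "Tp (Rot u, Rot w) \<phi> (\<rho>, \<sigma>) =
    vsig (\<rho> / 2 + u) * vsig (\<rho> / 2) * vsig (\<sigma> / 2 + w) * vsig (\<sigma> / 2) * \<phi> (\<rho> + 2 * u, \<sigma> + 2 * w)"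
proof -
  have "ang (cot (\<rho> / 2 + u)) = \<rho> + 2 * u + of_int (- \<lfloor>(\<rho> / 2 + u) / pi\<rfloor>) * (2 * pi)"
    "ang (cot (\<sigma> / 2 + w)) = \<sigma> + 2 * w + of_int (- \<lfloor>(\<sigma> / 2 + w) / pi\<rfloor>) * (2 * pi)"
    using ang_cot[OF assms(4)] ang_cot[OF assms(5)] by simp_all
  then have "\<phi> (ang (cot (\<rho> / 2 + u)), ang (cot (\<sigma> / 2 + w))) = \<phi> (\<rho> + 2 * u, \<sigma> + 2 * w)"
    by (simp only: doubly_periodic_of_int[OF assms(1)])
  then show ?thesis
    unfolding Tp_def using assms by (simp add: Let_def proj_act_Rot_cot sfac_Rot_cot)
qed

section \<open>The sign twist\<close>

lemma vsig_add_pi: "vsig (x + pi) = - vsig x"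
  by (simp add: vsig_def sgn_minus)

lemma vsig_minus: "vsig (- x) = - vsig x"
  by (simp add: vsig_def sgn_minus)

lemma vsig_mult_self: "sin x \<noteq> 0 \<Longrightarrow> vsig x * vsig x = 1"
  by (auto simp: vsig_def sgn_if)

lemma vsig_half_add_2pi: "vsig ((x + 2 * pi) / 2) = - vsig (x / 2)"
  using vsig_add_pi[of "x / 2"] by (simp add: add_divide_distrib)

lemma borel_measurable_vsig [measurable]: "vsig \<in> borel_measurable borel"
  unfolding vsig_def by measurable

text \<open>Multiplying by the signs of the half angles absorbs the factors sfac of the action,
  at the price of turning 2\<pi>-periodicity into antiperiodicity.\<close>
definition twist :: "(real \<times> real \<Rightarrow> real) \<Rightarrow> real \<times> real \<Rightarrow> real" where
  "twist \<phi> p = vsig (fst p / 2) * vsig (snd p / 2) * \<phi> p"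

definition doubly_antiperiodic :: "(real \<times> real \<Rightarrow> real) \<Rightarrow> bool" where
  "doubly_antiperiodic \<psi> \<longleftrightarrow>
     (\<forall>\<rho> \<sigma>. \<psi> (\<rho> + 2 * pi, \<sigma>) = - \<psi> (\<rho>, \<sigma>) \<and> \<psi> (\<rho>, \<sigma> + 2 * pi) = - \<psi> (\<rho>, \<sigma>))"

lemma doubly_antiperiodic_twist: "doubly_periodic \<phi> \<Longrightarrow> doubly_antiperiodic (twist \<phi>)"
  by (simp add: doubly_periodic_def doubly_antiperiodic_def twist_def vsig_half_add_2pi)

lemma borel_measurable_twist [measurable]:
  assumes [measurable]: "\<phi> \<in> borel_measurable borel"
  shows "twist \<phi> \<in> borel_measurable borel"
proof -
  have [measurable]: "\<phi> \<in> borel_measurable (borel \<Otimes>\<^sub>M borel)"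
    using assms by (simp only: borel_prod)
  have "twist \<phi> \<in> borel_measurable (borel \<Otimes>\<^sub>M borel)" unfolding twist_def by measurable
  then show ?thesis by (simp only: borel_prod)
qed

lemma vsig_halves_twist:
  "sin (\<rho> / 2) \<noteq> 0 \<Longrightarrow> sin (\<sigma> / 2) \<noteq> 0 \<Longrightarrow> vsig (\<rho> / 2) * vsig (\<sigma> / 2) * twist \<phi> (\<rho>, \<sigma>) = \<phi> (\<rho>, \<sigma>)"
  by (simp add: twist_def mult.assoc[symmetric] vsig_mult_self)
    (simp add: mult.commute mult.left_commute mult.assoc[symmetric] vsig_mult_self)

lemma Tp_Rot_fixed_iff:
  assumes "doubly_periodic \<phi>"
    and "sin (\<rho> / 2) \<noteq> 0" "sin (\<sigma> / 2) \<noteq> 0" "sin (\<rho> / 2 + u) \<noteq> 0" "sin (\<sigma> / 2 + w) \<noteq> 0"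
  shows "Tp (Rot u, Rot w) \<phi> (\<rho>, \<sigma>) = \<phi> (\<rho>, \<sigma>) \<longleftrightarrow>
    twist \<phi> (\<rho> + 2 * u, \<sigma> + 2 * w) = twist \<phi> (\<rho>, \<sigma>)"
proof -
  have "(\<rho> + 2 * u) / 2 = \<rho> / 2 + u" "(\<sigma> + 2 * w) / 2 = \<sigma> / 2 + w" by simp_all
  then have "Tp (Rot u, Rot w) \<phi> (\<rho>, \<sigma>) = vsig (\<rho> / 2) * vsig (\<sigma> / 2) * twist \<phi> (\<rho> + 2 * u, \<sigma> + 2 * w)"
    unfolding Tp_Rot[OF assms] twist_def fst_conv snd_conv by (simp only: mult_ac)
  moreover have "vsig (\<rho> / 2) * vsig (\<sigma> / 2) \<noteq> 0"
    using assms(2,3) by (simp add: vsig_def sgn_eq_0_iff)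
  ultimately show ?thesis
    using vsig_halves_twist[OF assms(2,3), of \<phi>] by (metis mult_left_cancel)
qed

lemma AE_lborel_translate:
  fixes c :: "'a::euclidean_space"
  assumes "AE x in lborel. P x"
  shows "AE x in lborel. P (x + c)"
proof -
  from assms obtain N where "N \<in> null_sets lborel" "{x. \<not> P x} \<subseteq> N"
    by (auto simp: eventually_ae_filter)
  then show ?thesis
    by (intro AE_I'[OF null_sets_translation[of N "- c"]]) auto
qed

lemma AE_lborel_fst:
  assumes "AE x in lborel. P x"
  shows "AE p in (lborel :: ('a::euclidean_space \<times> 'b::euclidean_space) measure). P (fst p)"
proof -
  from assms obtain N where N: "N \<in> null_sets lborel" "{x. \<not> P x} \<subseteq> N"
    by (auto simp: eventually_ae_filter)
  have "N \<times> UNIV \<in> null_sets (lborel \<Otimes>\<^sub>M (lborel :: 'b measure))"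
    using N(1) by (intro lborel.times_in_null_sets1) auto
  then have "N \<times> UNIV \<in> null_sets (lborel :: ('a \<times> 'b) measure)" by (simp only: lborel_prod)
  then show ?thesis by (rule AE_I') (use N(2) in auto)
qed

lemma AE_lborel_snd:
  assumes "AE y in lborel. P y"
  shows "AE p in (lborel :: ('a::euclidean_space \<times> 'b::euclidean_space) measure). P (snd p)"
proof -
  from assms obtain N where N: "N \<in> null_sets lborel" "{y. \<not> P y} \<subseteq> N"
    by (auto simp: eventually_ae_filter)
  have "UNIV \<times> N \<in> null_sets ((lborel :: 'a measure) \<Otimes>\<^sub>M lborel)"
    using N(1) by (intro lborel.times_in_null_sets2) auto
  then have "UNIV \<times> N \<in> null_sets (lborel :: ('a \<times> 'b) measure)" by (simp only: lborel_prod)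
  then show ?thesis by (rule AE_I') (use N(2) in auto)
qed

lemma AE_sin_half_nonzero: "AE x in lborel. sin (x / 2 + c) \<noteq> 0" for c :: real
proof -
  have "sin (x / 2 + c) \<noteq> 0" if "x \<notin> range (\<lambda>i::int. 2 * (of_int i * pi - c))" for x
  proof
    assume "sin (x / 2 + c) = 0"
    then obtain i :: int where "x / 2 + c = of_int i * pi" by (auto simp: sin_zero_iff_int2)
    then have "x = 2 * (of_int i * pi - c)" by (simp add: algebra_simps)
    then show False using that by blast
  qed
  moreover have "AE x in lborel. x \<notin> range (\<lambda>i::int. 2 * (of_int i * pi - c))"
    by (rule AE_not_in[OF countable_imp_null_set_lborel]) simp
  ultimately show ?thesis by (auto elim: eventually_mono)
qed

lemma AE_sin_halves_nonzero:
  "AE p in (lborel :: (real \<times> real) measure). sin (fst p / 2 + c) \<noteq> 0 \<and> sin (snd p / 2 + d) \<noteq> 0"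
  using AE_lborel_fst[OF AE_sin_half_nonzero[of c]] AE_lborel_snd[OF AE_sin_half_nonzero[of d]]
  by eventually_elim simp

lemma AE_lborel_shear:
  fixes c d :: real
  assumes c: "c \<noteq> 0" and "AE p in lborel. P p"
  shows "AE q in lborel. P (fst q, c * snd q + d * fst q)"
proof -
  from assms(2) obtain N where N: "N \<in> null_sets (lborel :: (real \<times> real) measure)" "{p. \<not> P p} \<subseteq> N"
    by (auto simp: eventually_ae_filter)
  have [measurable]: "N \<in> sets borel" using N(1) null_setsD2 by auto
  define Q where "Q = (\<lambda>q. (fst q, c * snd q + d * fst q)) -` N"
  have [measurable]: "Q \<in> sets borel" unfolding Q_def
    by (rule measurable_sets_borel[OF borel_measurable_continuous_onI]) (intro continuous_intros, simp)
  have "emeasure lborel Q = (\<integral>\<^sup>+ q. indicator Q q \<partial>(lborel \<Otimes>\<^sub>M lborel))"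
    unfolding lborel_prod by simp
  also have "\<dots> = (\<integral>\<^sup>+ x. \<integral>\<^sup>+ u. indicator N (x, c * u + d * x) \<partial>lborel \<partial>lborel)"
    by (subst lborel.nn_integral_fst[symmetric]) (auto simp: Q_def indicator_def)
  also have "\<dots> = (\<integral>\<^sup>+ x. ennreal (1 / \<bar>c\<bar>) * \<integral>\<^sup>+ y. indicator N (x, y) \<partial>lborel \<partial>lborel)"
  proof (rule nn_integral_cong)
    fix x :: real
    have "(\<integral>\<^sup>+ y. indicator N (x, y) \<partial>lborel) = \<bar>c\<bar> * (\<integral>\<^sup>+ u. indicator N (x, d * x + c * u) \<partial>lborel)"
      by (rule nn_integral_real_affine[OF _ c]) simp
    then show "(\<integral>\<^sup>+ u. indicator N (x, c * u + d * x) \<partial>lborel)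
        = ennreal (1 / \<bar>c\<bar>) * \<integral>\<^sup>+ y. indicator N (x, y) \<partial>lborel"
      using c by (simp add: add.commute ennreal_mult[symmetric] mult.assoc[symmetric])
  qed
  also have "\<dots> = ennreal (1 / \<bar>c\<bar>) * (\<integral>\<^sup>+ x. \<integral>\<^sup>+ y. indicator N (x, y) \<partial>lborel \<partial>lborel)"
    by (rule nn_integral_cmult) simp
  also have "(\<integral>\<^sup>+ x. \<integral>\<^sup>+ y. indicator N (x, y) \<partial>lborel \<partial>lborel) = emeasure lborel N"
    by (subst lborel.nn_integral_fst) (auto simp: lborel_prod)
  also have "\<dots> = 0" using N(1) by auto
  finally have "Q \<in> null_sets lborel" by auto
  then show ?thesis by (rule AE_I') (use N(2) in \<open>auto simp: Q_def\<close>)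
qed

lemma AE_lborel_imp_ex:
  assumes "AE x in (lborel :: 'a::euclidean_space measure). P x"
  shows "\<exists>x. P x"
proof (rule ccontr)
  assume "\<nexists>x. P x"
  with assms have "AE x in (lborel :: 'a measure). False" by auto
  then show False by (auto dest: AE_E2)
qed

lemma AE_lborel_pair_iff:
  assumes "{p :: 'a::euclidean_space \<times> 'b::euclidean_space. P (fst p) (snd p)} \<in> sets borel"
  shows "(AE x in lborel. AE y in lborel. P x y) \<longleftrightarrow> (AE p in lborel. P (fst p) (snd p))"
proof -
  have "{p \<in> space (lborel \<Otimes>\<^sub>M lborel). P (fst p) (snd p)} \<in> sets (lborel \<Otimes>\<^sub>M (lborel :: 'b measure))"
    using assms unfolding lborel_prod by simp
  from lborel_pair.AE_pair_iff[OF this] show ?thesis by (simp only: lborel_prod)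
qed

lemma AE_lborel_commute:
  assumes "{p :: 'a::euclidean_space \<times> 'b::euclidean_space. P (fst p) (snd p)} \<in> sets borel"
  shows "(AE x in lborel. AE y in lborel. P x y) \<longleftrightarrow> (AE y in lborel. AE x in lborel. P x y)"
proof -
  have "{p \<in> space (lborel \<Otimes>\<^sub>M lborel). P (fst p) (snd p)} \<in> sets (lborel \<Otimes>\<^sub>M (lborel :: 'b measure))"
    using assms unfolding lborel_prod by simp
  from lborel_pair.AE_commute[OF this] show ?thesis .
qed

lemma AE_linear_form:
  fixes \<alpha> \<beta> :: real
  assumes "\<beta> \<noteq> 0" "AE u in lborel. R u"
  shows "AE p in lborel. R (\<alpha> * fst p + \<beta> * snd p)"
  using AE_lborel_shear[OF assms(1) AE_lborel_snd[OF assms(2)], of \<alpha>] by (simp add: add.commute)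

lemma AE_of_AE_linear_form:
  fixes \<alpha> \<beta> :: real
  assumes "\<beta> \<noteq> 0" "{u. R u} \<in> sets borel" "AE p in lborel. R (\<alpha> * fst p + \<beta> * snd p)"
  shows "AE u in lborel. R u"
proof -
  have "AE q in lborel. R (\<alpha> * fst q + \<beta> * ((1 / \<beta>) * snd q + (- \<alpha> / \<beta>) * fst q))"
    using AE_lborel_shear[OF _ assms(3), of "1 / \<beta>" "- \<alpha> / \<beta>"] assms(1) by simp
  then have "AE q in (lborel :: (real \<times> real) measure). R (snd q)"
    using assms(1) by (simp add: field_simps)
  moreover have "{p :: real \<times> real. R (snd p)} \<in> sets borel"
    using measurable_sets_borel[OF borel_measurable_continuous_onI assms(2), of snd]
    by (simp add: continuous_on_snd vimage_def)
  ultimately have "AE x in (lborel :: real measure). AE u in lborel. R u"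
    using AE_lborel_pair_iff[where 'a=real and 'b=real, of "\<lambda>x u. R u"] by simp
  then show ?thesis using AE_lborel_imp_ex by blast
qed

lemma AE_doubly_periodic_Pbox:
  assumes "doubly_periodic Q" "AE p in lborel. p \<in> Pbox \<longrightarrow> Q p"
  shows "AE p in lborel. Q p"
proof -
  define shift where "shift jk = (of_int (fst jk) * (2 * pi), of_int (snd jk) * (2 * pi))" for jk :: "int \<times> int"
  have "AE p in lborel. p + shift jk \<in> Pbox \<longrightarrow> Q p" for jk
    using AE_lborel_translate[OF assms(2), of "shift jk"]
  proof eventually_elim
    case (elim p)
    then show ?case
      using doubly_periodic_of_int[OF assms(1), of "fst p" "fst jk" "snd p" "snd jk"]
      by (cases p) (simp add: shift_def)
  qed
  then have "AE p in lborel. \<forall>jk. p + shift jk \<in> Pbox \<longrightarrow> Q p"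
    by (simp only: AE_all_countable) blast
  then show ?thesis
  proof eventually_elim
    case (elim p)
    let ?jk = "(- \<lfloor>fst p / (2 * pi)\<rfloor>, - \<lfloor>snd p / (2 * pi)\<rfloor>)"
    have "x - of_int \<lfloor>x / (2 * pi)\<rfloor> * (2 * pi) \<in> {0 .. 2 * pi}" for x :: real
      using floor_divide_lower[of "2 * pi" x] floor_divide_upper[of "2 * pi" x]
      by (auto simp: algebra_simps)
    then have "p + shift ?jk \<in> Pbox"
      by (cases p) (simp add: shift_def Pbox_def)
    with elim show ?case by blast
  qed
qed

section \<open>Functions invariant under translations along a line\<close>

lemma AE_null_sections:
  fixes D :: "('a::euclidean_space \<times> 'b::euclidean_space) set"
  assumes D: "D \<in> sets borel" and null: "\<And>y. emeasure lborel ((\<lambda>x. (x, y)) -` D) = 0"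
  shows "AE x in lborel. emeasure lborel (Pair x -` D) = 0"
proof -
  have Dm: "D \<in> sets (lborel \<Otimes>\<^sub>M lborel)" unfolding lborel_prod using D by simp
  have "(\<integral>\<^sup>+ x. emeasure lborel (Pair x -` D) \<partial>lborel) = emeasure (lborel \<Otimes>\<^sub>M lborel) D"
    using lborel.emeasure_pair_measure_alt[OF Dm] by simp
  also have "\<dots> = 0" using lborel_pair.emeasure_pair_measure_alt2[OF Dm] by (simp add: null)
  finally show ?thesis
    using lborel_pair.measurable_emeasure_Pair1[OF Dm] by (simp add: nn_integral_0_iff_AE)
qed

lemma sets_null_sections:
  fixes D :: "('a::euclidean_space \<times> 'b::euclidean_space) set"
  assumes "D \<in> sets borel"
  shows "{x. emeasure lborel (Pair x -` D) = 0} \<in> sets borel"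
proof -
  have "(\<lambda>x. emeasure lborel (Pair x -` D)) \<in> borel_measurable (lborel :: 'a measure)"
    using lborel_pair.measurable_emeasure_Pair1[of D] assms by (simp add: lborel_prod)
  then have "(\<lambda>x. emeasure lborel (Pair x -` D)) -` {0} \<in> sets borel"
    by (intro measurable_sets_borel[of _ borel]) auto
  then show ?thesis by (simp add: vimage_def)
qed

lemma tan_integral_arctan_AE_const:
  assumes [measurable]: "f \<in> borel_measurable borel" and "AE x in lborel. f x = c"
  shows "tan (LINT x|lborel. indicator {0..1::real} x * arctan (f x)) = c"
proof -
  have "(LINT x|lborel. indicator {0..1::real} x * arctan (f x))
      = (LINT x|lborel. indicator {0..1::real} x * arctan c)"
    by (rule integral_cong_AE) (use assms in \<open>auto elim!: eventually_mono\<close>)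
  then show ?thesis by (simp add: tan_arctan)
qed

lemma AE_invariant_fst_sections_const:
  fixes g :: "real \<times> real \<Rightarrow> real"
  assumes [measurable]: "g \<in> borel_measurable borel"
    and inv: "\<And>s. AE q in lborel. g (fst q + s, snd q) = g q"
  shows "AE u in lborel. \<exists>c. AE x in lborel. g (x, u) = c"
proof -
  define D where "D = {z :: (real \<times> real) \<times> real. g (fst (fst z) + snd z, snd (fst z)) \<noteq> g (fst z)}"
  have [measurable]: "g \<in> borel_measurable (borel \<Otimes>\<^sub>M borel)" by (simp add: borel_prod)
  have "{z \<in> space ((borel \<Otimes>\<^sub>M borel) \<Otimes>\<^sub>M borel). g (fst (fst z) + snd z, snd (fst z)) \<noteq> g (fst z)}
      \<in> sets ((borel \<Otimes>\<^sub>M borel) \<Otimes>\<^sub>M (borel :: real measure))"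
    by measurable
  then have D[measurable]: "D \<in> sets borel" unfolding D_def by (simp only: borel_prod) simp
  have section_borel: "(\<lambda>x. (x, y)) -` D \<in> sets lborel" "Pair x -` D \<in> sets lborel" for x y
    unfolding sets_lborel by (rule measurable_sets_borel[OF _ D], simp)+
  have "emeasure lborel ((\<lambda>q. (q, s)) -` D) = 0" for s
  proof -
    have "{q \<in> space lborel. \<not> g (fst q + s, snd q) = g q} = (\<lambda>q. (q, s)) -` D"
      by (auto simp: D_def)
    from iffD1[OF AE_iff_measurable[OF section_borel(1) this] inv[of s]] show ?thesis .
  qed
  then have AE_null: "AE q in lborel. emeasure lborel (Pair q -` D) = 0"
    by (rule AE_null_sections[OF D])
  have S: "{p :: real \<times> real. emeasure lborel (Pair (fst p, snd p) -` D) = 0} \<in> sets borel"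
    using sets_null_sections[OF D] by simp
  have "AE x in lborel. AE u in lborel. emeasure lborel (Pair (x, u) -` D) = 0"
    using AE_lborel_pair_iff[OF S] AE_null by simp
  then have "AE u in lborel. AE x in lborel. emeasure lborel (Pair (x, u) -` D) = 0"
    by (rule AE_lborel_commute[OF S, THEN iffD1])
  then show ?thesis
  proof eventually_elim
    case (elim u)
    then obtain x0 where x0: "emeasure lborel (Pair (x0, u) -` D) = 0" using AE_lborel_imp_ex by blast
    have "{s \<in> space lborel. \<not> g (x0 + s, u) = g (x0, u)} = Pair (x0, u) -` D"
      by (auto simp: D_def)
    from iffD2[OF AE_iff_measurable[OF section_borel(2) this] x0]
    have "AE s in lborel. g (x0 + s, u) = g (x0, u)" .
    from AE_lborel_translate[OF this, of "- x0"] show ?case by auto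
  qed
qed

lemma AE_invariant_fst_imp_function_of_snd:
  fixes g :: "real \<times> real \<Rightarrow> real"
  assumes [measurable]: "g \<in> borel_measurable borel"
    and inv: "\<And>s. AE q in lborel. g (fst q + s, snd q) = g q"
  shows "\<exists>h \<in> borel_measurable borel. AE q in lborel. g q = h (snd q)"
proof -
  \<comment> \<open>arctan keeps the sections integrable; tan recovers their a.e. constant value.\<close>
  define F where "F u = (LINT x|lborel. indicator {0..1::real} x * arctan (g (x, u)))" for u
  define h where "h u = tan (F u)" for u
  have [measurable]: "g \<in> borel_measurable (borel \<Otimes>\<^sub>M borel)" by (simp add: borel_prod)
  have [measurable]: "F \<in> borel_measurable borel"
    unfolding F_def by (rule lborel.borel_measurable_lebesgue_integral) measurable
  have h_meas [measurable]: "h \<in> borel_measurable borel" unfolding h_def tan_def by measurable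
  have "{p \<in> space (borel \<Otimes>\<^sub>M borel). g p = h (snd p)} \<in> sets (borel \<Otimes>\<^sub>M (borel :: real measure))"
    by measurable
  then have S: "{p :: real \<times> real. g (fst p, snd p) = h (snd p)} \<in> sets borel"
    by (simp only: borel_prod) simp
  have "AE u in lborel. AE x in lborel. g (x, u) = h u"
    using AE_invariant_fst_sections_const[OF assms]
  proof eventually_elim
    case (elim u)
    then obtain c where c: "AE x in lborel. g (x, u) = c" by blast
    have "h u = c" unfolding h_def F_def by (rule tan_integral_arctan_AE_const[OF _ c]) measurable
    with c show ?case by simp
  qed
  then have "AE x in lborel. AE u in lborel. g (x, u) = h u"
    by (rule AE_lborel_commute[OF S, THEN iffD2])
  then have "AE q in lborel. g q = h (snd q)"
    using AE_lborel_pair_iff[OF S] by simp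
  with h_meas show ?thesis by blast
qed

lemma AE_translation_invariant_imp_function_of_form:
  fixes \<psi> :: "real \<times> real \<Rightarrow> real" and a b \<alpha> \<beta> :: real
  assumes [measurable]: "\<psi> \<in> borel_measurable borel"
    and "a \<noteq> 0" "\<beta> \<noteq> 0" "a * \<alpha> + b * \<beta> = 0"
    and inv: "\<And>t. AE p in lborel. \<psi> (fst p + t * a, snd p + t * b) = \<psi> p"
  shows "\<exists>h \<in> borel_measurable borel. AE p in lborel. \<psi> p = h (\<alpha> * fst p + \<beta> * snd p)"
proof -
  define g where "g q = \<psi> (fst q, (snd q - \<alpha> * fst q) / \<beta>)" for q
  have [measurable]: "\<psi> \<in> borel_measurable (borel \<Otimes>\<^sub>M borel)" by (simp add: borel_prod)
  have "g \<in> borel_measurable (borel \<Otimes>\<^sub>M borel)" unfolding g_def by measurable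
  then have g_meas: "g \<in> borel_measurable borel" by (simp add: borel_prod)
  have "AE q in lborel. g (fst q + s, snd q) = g q" for s
  proof -
    have "b * \<beta> = - (a * \<alpha>)" using assms(4) by linarith
    have "s / a * b = s * (b * \<beta>) / (a * \<beta>)" using assms(2,3) by simp
    also have "\<dots> = - \<alpha> * s / \<beta>" using assms(2,3) by (simp add: \<open>b * \<beta> = - (a * \<alpha>)\<close>)
    finally have "s / a * b = - \<alpha> * s / \<beta>" .
    then have shift: "(y - \<alpha> * (x + s)) / \<beta> = 1 / \<beta> * y + - \<alpha> / \<beta> * x + s / a * b" for x y
      using assms(3) by (simp add: field_simps)
    show ?thesis
      using AE_lborel_shear[OF _ inv[of "s / a"], of "1 / \<beta>" "- \<alpha> / \<beta>"] assms(2,3)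
      unfolding g_def fst_conv snd_conv shift by (simp add: diff_divide_distrib)
  qed
  then obtain h where [measurable]: "h \<in> borel_measurable borel" and "AE q in lborel. g q = h (snd q)"
    using AE_invariant_fst_imp_function_of_snd[OF g_meas] by blast
  from AE_lborel_shear[OF assms(3) this(2), of \<alpha>]
  have "AE p in lborel. \<psi> p = h (\<beta> * snd p + \<alpha> * fst p)"
    using assms(3) by (simp add: g_def)
  then show ?thesis by (auto simp: add.commute)
qed

lemma doubly_periodic_shift_invariance:
  assumes "doubly_antiperiodic \<psi>"
  shows "doubly_periodic (\<lambda>p. \<psi> (fst p + s, snd p + t) = \<psi> p)"
  unfolding doubly_periodic_def
proof (intro allI conjI)
  fix \<rho> \<sigma> :: real
  have antiper: "\<psi> (x + 2 * pi, y) = - \<psi> (x, y)" "\<psi> (x, y + 2 * pi) = - \<psi> (x, y)" for x y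
    using assms unfolding doubly_antiperiodic_def by simp_all
  have "\<rho> + 2 * pi + s = (\<rho> + s) + 2 * pi" "\<sigma> + 2 * pi + t = (\<sigma> + t) + 2 * pi"
    by simp_all
  then show "(\<psi> (fst (\<rho> + 2 * pi, \<sigma>) + s, snd (\<rho> + 2 * pi, \<sigma>) + t) = \<psi> (\<rho> + 2 * pi, \<sigma>))
      = (\<psi> (fst (\<rho>, \<sigma>) + s, snd (\<rho>, \<sigma>) + t) = \<psi> (\<rho>, \<sigma>))"
    "(\<psi> (fst (\<rho>, \<sigma> + 2 * pi) + s, snd (\<rho>, \<sigma> + 2 * pi) + t) = \<psi> (\<rho>, \<sigma> + 2 * pi))
      = (\<psi> (fst (\<rho>, \<sigma>) + s, snd (\<rho>, \<sigma>) + t) = \<psi> (\<rho>, \<sigma>))"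
    by (simp_all only: fst_conv snd_conv antiper neg_equal_iff_equal)
qed

lemma fixed_by_Rot_iff:
  assumes per: "doubly_periodic \<phi>"
  shows "(AE p in lborel. p \<in> Pbox \<longrightarrow> Tp (Rot u, Rot w) \<phi> p = \<phi> p) \<longleftrightarrow>
         (AE p in lborel. twist \<phi> (fst p + 2 * u, snd p + 2 * w) = twist \<phi> p)"
proof -
  have equiv: "AE p in lborel.
      Tp (Rot u, Rot w) \<phi> p = \<phi> p \<longleftrightarrow> twist \<phi> (fst p + 2 * u, snd p + 2 * w) = twist \<phi> p"
    using AE_sin_halves_nonzero[of 0 0] AE_sin_halves_nonzero[of u w]
  proof eventually_elim
    case (elim p)
    then show ?case using Tp_Rot_fixed_iff[OF per, of "fst p" "snd p" u w] by simp
  qed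
  show ?thesis
  proof
    assume "AE p in lborel. p \<in> Pbox \<longrightarrow> Tp (Rot u, Rot w) \<phi> p = \<phi> p"
    with equiv have "AE p in lborel. p \<in> Pbox \<longrightarrow> twist \<phi> (fst p + 2 * u, snd p + 2 * w) = twist \<phi> p"
      by eventually_elim blast
    then show "AE p in lborel. twist \<phi> (fst p + 2 * u, snd p + 2 * w) = twist \<phi> p"
      by (rule AE_doubly_periodic_Pbox[OF doubly_periodic_shift_invariance[OF doubly_antiperiodic_twist[OF per]]])
  next
    assume "AE p in lborel. twist \<phi> (fst p + 2 * u, snd p + 2 * w) = twist \<phi> p"
    with equiv show "AE p in lborel. p \<in> Pbox \<longrightarrow> Tp (Rot u, Rot w) \<phi> p = \<phi> p"
      by eventually_elim blast
  qed
qed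

lemma fixed_by_H_iff:
  assumes "doubly_periodic \<phi>"
  shows "fixed_by (H N a b) \<phi> \<longleftrightarrow> (\<forall>\<theta> i. i \<in> {0..N - 1} \<longrightarrow> (AE p in lborel.
    twist \<phi> (fst p + 2 * (of_int a * \<theta>), snd p + 2 * (of_int b * \<theta> + 2 * pi * of_int i / of_int N))
      = twist \<phi> p))"
  unfolding fixed_by_def H_def using fixed_by_Rot_iff[OF assms] by blast

section \<open>Antiperiodic functions and almost everywhere antiperiodic functions\<close>

definition parity_sign :: "int \<Rightarrow> real" where
  "parity_sign k = (if even k then 1 else - 1)"

lemma parity_sign_add: "parity_sign (k + l) = parity_sign k * parity_sign l"
  by (auto simp: parity_sign_def)

lemma parity_sign_even [simp]: "even k \<Longrightarrow> parity_sign k = 1"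
  and parity_sign_odd [simp]: "odd k \<Longrightarrow> parity_sign k = - 1"
  by (simp_all add: parity_sign_def)

definition antiperiodic :: "real \<Rightarrow> (real \<Rightarrow> real) \<Rightarrow> bool" where
  "antiperiodic L \<Theta> \<longleftrightarrow> (\<forall>u. \<Theta> (u + L) = - \<Theta> u)"

lemma admissible_iff:
  "admissible L \<Theta> \<longleftrightarrow> antiperiodic L \<Theta> \<and> \<Theta> \<in> borel_measurable borel
     \<and> set_integrable lborel {0..L} (\<lambda>u. (\<Theta> u)^2)"
  by (simp add: admissible_def antiperiodic_def)

lemma antiperiodic_of_int:
  assumes "antiperiodic L \<Theta>"
  shows "\<Theta> (u + of_int k * L) = parity_sign k * \<Theta> u"
proof -
  have "\<Theta> (x + 2 * L) = \<Theta> x" for x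
    using assms unfolding antiperiodic_def by (metis add.assoc minus_minus mult_2)
  then have even_shift: "\<Theta> (x + of_int j * (2 * L)) = \<Theta> x" for x j
    by (rule periodic_of_int)
  show ?thesis
  proof (cases "even k")
    case True
    then obtain j where "k = 2 * j" by auto
    then show ?thesis using even_shift[of u j] by (simp add: algebra_simps)
  next
    case False
    then obtain j where "k = 2 * j + 1" by (metis oddE)
    then have "\<Theta> (u + of_int k * L) = \<Theta> ((u + of_int j * (2 * L)) + L)"
      by (simp add: algebra_simps)
    also have "\<dots> = - \<Theta> u"
      using even_shift[of u j] assms unfolding antiperiodic_def by simp
    finally show ?thesis using False by simp
  qed
qed

lemma AE_shift_add:
  fixes h :: "real \<Rightarrow> real"
  assumes "AE u in lborel. h (u + d1) = e1 * h u" "AE u in lborel. h (u + d2) = e2 * h u"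
  shows "AE u in lborel. h (u + (d1 + d2)) = e1 * e2 * h u"
proof -
  have "AE u in lborel. h (u + d2 + d1) = e1 * h (u + d2)"
    using AE_lborel_translate[OF assms(1), of d2] by simp
  with assms(2) show ?thesis by eventually_elim (simp add: algebra_simps)
qed

lemma AE_shift_of_int:
  fixes h :: "real \<Rightarrow> real"
  assumes "AE u in lborel. h (u + d) = parity_sign k * h u"
  shows "AE u in lborel. h (u + of_int m * d) = parity_sign (k * m) * h u"
proof -
  have nat_case: "AE u in lborel. h (u + real n * d) = parity_sign (k * int n) * h u" for n
  proof (induction n)
    case 0
    then show ?case by simp
  next
    case (Suc n)
    from AE_shift_add[OF assms Suc] show ?case
      by (simp add: algebra_simps parity_sign_add)
  qed
  show ?thesis
  proof (cases "m \<ge> 0")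
    case True
    then show ?thesis using nat_case[of "nat m"] by simp
  next
    case False
    define e where "e = parity_sign (k * m)"
    have "e * e = 1" by (simp add: e_def parity_sign_def)
    have "AE u in lborel. h (u + of_int m * d + real (nat (- m)) * d) = e * h (u + of_int m * d)"
      using AE_lborel_translate[OF nat_case[of "nat (- m)"], of "of_int m * d"] False
      by (simp add: e_def parity_sign_def)
    then show ?thesis
    proof eventually_elim
      case (elim u)
      have "real (nat (- m)) = - of_int m" using False by simp
      with elim have hu: "h u = e * h (u + of_int m * d)" by (simp add: algebra_simps)
      have "h (u + of_int m * d) = (e * e) * h (u + of_int m * d)" using \<open>e * e = 1\<close> by simp
      also have "\<dots> = e * h u" by (simp add: hu mult.assoc)
      finally show ?case by (simp add: e_def)
    qed
  qed
qed

lemma AE_antiperiodic_of_generators: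
  fixes h :: "real \<Rightarrow> real"
  assumes "AE u in lborel. h (u + of_int k1 * L) = parity_sign k1 * h u"
    and "AE u in lborel. h (u + of_int k2 * L) = parity_sign k2 * h u"
    and "AE u in lborel. h (u + of_int k3 * L) = parity_sign k3 * h u"
    and "m1 * k1 + m2 * k2 + m3 * k3 = 1"
  shows "AE u in lborel. h (u + L) = - h u"
proof -
  have "AE u in lborel. h (u + (of_int m1 * (of_int k1 * L) + (of_int m2 * (of_int k2 * L) + of_int m3 * (of_int k3 * L))))
      = parity_sign (k1 * m1) * (parity_sign (k2 * m2) * parity_sign (k3 * m3)) * h u"
    by (intro AE_shift_add AE_shift_of_int assms(1-3))
  moreover have "of_int m1 * (of_int k1 * L) + (of_int m2 * (of_int k2 * L) + of_int m3 * (of_int k3 * L))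
      = of_int (m1 * k1 + m2 * k2 + m3 * k3) * L"
    by (simp add: algebra_simps)
  moreover have "parity_sign (k1 * m1) * (parity_sign (k2 * m2) * parity_sign (k3 * m3))
      = parity_sign (m1 * k1 + m2 * k2 + m3 * k3)"
    by (simp add: parity_sign_add mult.commute)
  ultimately show ?thesis using assms(4) by simp
qed

definition antiperiodic_ext :: "real \<Rightarrow> (real \<Rightarrow> real) \<Rightarrow> real \<Rightarrow> real" where
  "antiperiodic_ext L f u = parity_sign \<lfloor>u / L\<rfloor> * f (u - L * of_int \<lfloor>u / L\<rfloor>)"

lemma antiperiodic_antiperiodic_ext:
  assumes "L > 0"
  shows "antiperiodic L (antiperiodic_ext L f)"
proof -
  have "\<lfloor>(u + L) / L\<rfloor> = \<lfloor>u / L\<rfloor> + 1" for u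
    using assms by (simp add: add_divide_distrib)
  then show ?thesis
    unfolding antiperiodic_def antiperiodic_ext_def by (simp add: parity_sign_add algebra_simps)
qed

lemma antiperiodic_ext_eq:
  assumes "L > 0" "0 \<le> u" "u < L"
  shows "antiperiodic_ext L f u = f u"
proof -
  have "\<lfloor>u / L\<rfloor> = 0" using assms by (simp add: floor_eq_iff)
  then show ?thesis unfolding antiperiodic_ext_def by simp
qed

lemma borel_measurable_antiperiodic_ext [measurable]:
  assumes [measurable]: "f \<in> borel_measurable borel"
  shows "antiperiodic_ext L f \<in> borel_measurable borel"
  unfolding antiperiodic_ext_def parity_sign_def by measurable

lemma AE_antiperiodic_ext_eq:
  assumes "L > 0" "AE u in lborel. h (u + L) = - h u"
  shows "AE u in lborel. antiperiodic_ext L h u = h u"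
proof -
  have "AE u in lborel. h (u + of_int k * L) = parity_sign k * h u" for k
    using AE_shift_of_int[of h L 1 k] assms(2) by simp
  then have "AE u in lborel. \<forall>k. h (u + of_int k * L) = parity_sign k * h u"
    by (simp add: AE_all_countable)
  then show ?thesis
  proof eventually_elim
    case (elim u)
    from elim[rule_format, of "- \<lfloor>u / L\<rfloor>"]
    have "h (u - L * of_int \<lfloor>u / L\<rfloor>) = parity_sign \<lfloor>u / L\<rfloor> * h u"
      by (simp add: algebra_simps parity_sign_def)
    then show ?case
      unfolding antiperiodic_ext_def by (simp add: mult.assoc[symmetric] parity_sign_def)
  qed
qed

section \<open>Integrals of periodic functions\<close>

lemma set_integrable_square_iff:
  fixes f :: "'a::euclidean_space \<Rightarrow> real"
  assumes [measurable]: "A \<in> sets borel" "f \<in> borel_measurable borel"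
  shows "set_integrable lborel A (\<lambda>x. (f x)^2) \<longleftrightarrow> (\<integral>\<^sup>+x\<in>A. ennreal ((f x)^2) \<partial>lborel) < \<infinity>"
proof -
  have "(\<integral>\<^sup>+ x. ennreal (norm (indicator A x *\<^sub>R (f x)^2)) \<partial>lborel) = (\<integral>\<^sup>+x\<in>A. ennreal ((f x)^2) \<partial>lborel)"
    by (intro nn_integral_cong) (auto simp: indicator_def)
  then show ?thesis unfolding set_integrable_def integrable_iff_bounded by simp
qed

lemma set_integral_square:
  fixes f :: "'a::euclidean_space \<Rightarrow> real"
  assumes [measurable]: "A \<in> sets borel" "f \<in> borel_measurable borel"
  shows "set_lebesgue_integral lborel A (\<lambda>x. (f x)^2) = enn2real (\<integral>\<^sup>+x\<in>A. ennreal ((f x)^2) \<partial>lborel)"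
proof -
  have "set_lebesgue_integral lborel A (\<lambda>x. (f x)^2)
      = enn2real (\<integral>\<^sup>+ x. ennreal (indicator A x *\<^sub>R (f x)^2) \<partial>lborel)"
    unfolding set_lebesgue_integral_def by (intro integral_eq_nn_integral) auto
  also have "(\<integral>\<^sup>+ x. ennreal (indicator A x *\<^sub>R (f x)^2) \<partial>lborel) = (\<integral>\<^sup>+x\<in>A. ennreal ((f x)^2) \<partial>lborel)"
    by (intro nn_integral_cong) (auto simp: indicator_def)
  finally show ?thesis .
qed

lemma set_nn_integral_atLeastAtMost:
  fixes G :: "real \<Rightarrow> ennreal"
  shows "(\<integral>\<^sup>+x\<in>{a..b}. G x \<partial>lborel) = (\<integral>\<^sup>+x\<in>{a..<b}. G x \<partial>lborel)"
  by (rule nn_integral_cong_AE)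
    (use AE_lborel_singleton[of b] in \<open>eventually_elim, auto simp: indicator_def\<close>)

lemma set_nn_integral_atLeastLessThan_split:
  fixes G :: "real \<Rightarrow> ennreal"
  assumes [measurable]: "G \<in> borel_measurable borel" and "a \<le> b" "b \<le> c"
  shows "(\<integral>\<^sup>+x\<in>{a..<c}. G x \<partial>lborel) = (\<integral>\<^sup>+x\<in>{a..<b}. G x \<partial>lborel) + (\<integral>\<^sup>+x\<in>{b..<c}. G x \<partial>lborel)"
  using nn_integral_disjoint_pair[of G lborel "{a..<b}" "{b..<c}"] assms(2,3)
  by (simp add: ivl_disj_un_two(3))

lemma set_nn_integral_translate_period:
  fixes G :: "real \<Rightarrow> ennreal"
  assumes [measurable]: "G \<in> borel_measurable borel" and per: "\<And>x. G (x + s) = G x"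
  shows "(\<integral>\<^sup>+x\<in>{a + s..<b + s}. G x \<partial>lborel) = (\<integral>\<^sup>+x\<in>{a..<b}. G x \<partial>lborel)"
proof -
  have "(\<integral>\<^sup>+x\<in>{a + s..<b + s}. G x \<partial>lborel)
      = (\<integral>\<^sup>+x. G (s + x) * indicator {a + s..<b + s} (s + x) \<partial>lborel)"
    using nn_integral_real_affine[of "\<lambda>x. G x * indicator {a + s..<b + s} x" 1 s] by simp
  also have "\<dots> = (\<integral>\<^sup>+x\<in>{a..<b}. G x \<partial>lborel)"
    by (intro nn_integral_cong) (auto simp: indicator_def per add.commute)
  finally show ?thesis .
qed

lemma set_nn_integral_one_period:
  fixes G :: "real \<Rightarrow> ennreal"
  assumes [measurable]: "G \<in> borel_measurable borel" and per: "\<And>x. G (x + L) = G x" and "L > 0"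
  shows "(\<integral>\<^sup>+x\<in>{t..<t + L}. G x \<partial>lborel) = (\<integral>\<^sup>+x\<in>{0..<L}. G x \<partial>lborel)"
proof -
  define b where "b = of_int \<lceil>t / L\<rceil> * L"
  have b: "t \<le> b" "b < t + L"
    using ceiling_divide_upper[OF \<open>L > 0\<close>, of t] ceiling_divide_lower[OF \<open>L > 0\<close>, of t]
    by (simp_all add: b_def algebra_simps)
  have "(\<integral>\<^sup>+x\<in>{t..<t + L}. G x \<partial>lborel)
      = (\<integral>\<^sup>+x\<in>{b..<t + L}. G x \<partial>lborel) + (\<integral>\<^sup>+x\<in>{t + L..<b + L}. G x \<partial>lborel)"
    using b set_nn_integral_atLeastLessThan_split[of G t b "t + L"]
      set_nn_integral_translate_period[of G L t b] per by (simp add: add.commute)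
  also have "\<dots> = (\<integral>\<^sup>+x\<in>{b..<b + L}. G x \<partial>lborel)"
    using b by (intro set_nn_integral_atLeastLessThan_split[symmetric]) auto
  also have "\<dots> = (\<integral>\<^sup>+x\<in>{0..<L}. G x \<partial>lborel)"
    using set_nn_integral_translate_period[of G b 0 L] periodic_of_int[of G L, OF per]
    by (simp add: b_def add.commute)
  finally show ?thesis .
qed

lemma set_nn_integral_periods:
  fixes G :: "real \<Rightarrow> ennreal"
  assumes [measurable]: "G \<in> borel_measurable borel" and per: "\<And>x. G (x + L) = G x" and "L > 0"
  shows "(\<integral>\<^sup>+x\<in>{t..<t + real n * L}. G x \<partial>lborel) = of_nat n * (\<integral>\<^sup>+x\<in>{0..<L}. G x \<partial>lborel)"
proof (induction n)
  case (Suc n)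
  have "t + real (Suc n) * L = (t + real n * L) + L" by (simp add: algebra_simps)
  then have "(\<integral>\<^sup>+x\<in>{t..<t + real (Suc n) * L}. G x \<partial>lborel)
      = (\<integral>\<^sup>+x\<in>{t..<t + real n * L}. G x \<partial>lborel) + (\<integral>\<^sup>+x\<in>{t + real n * L..<(t + real n * L) + L}. G x \<partial>lborel)"
    using \<open>L > 0\<close> by (simp only:) (rule set_nn_integral_atLeastLessThan_split, auto)
  also have "\<dots> = of_nat n * (\<integral>\<^sup>+x\<in>{0..<L}. G x \<partial>lborel) + (\<integral>\<^sup>+x\<in>{0..<L}. G x \<partial>lborel)"
    using Suc.IH set_nn_integral_one_period[OF assms] by simp
  finally show ?case by (simp add: distrib_right)
qed simp

lemma affine_preimage_atLeastAtMost:
  fixes a \<beta> c v :: real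
  assumes "\<beta> \<noteq> 0" "0 \<le> c"
  shows "(v - a) / \<beta> \<in> {0..c} \<longleftrightarrow> v \<in> {min a (a + c * \<beta>)..min a (a + c * \<beta>) + \<bar>c * \<beta>\<bar>}"
proof (cases "\<beta> > 0")
  case True
  with assms(2) show ?thesis by (auto simp: field_simps min_def abs_mult)
next
  case False
  with assms have "\<beta> < 0" by simp
  with assms(2) show ?thesis
    by (auto simp: field_simps min_def abs_mult zero_le_divide_iff neg_divide_le_eq mult_le_0_iff)
qed

lemma set_nn_integral_periodic_affine:
  fixes G :: "real \<Rightarrow> ennreal"
  assumes [measurable]: "G \<in> borel_measurable borel" and per: "\<And>x. G (x + L) = G x" and "L > 0"
    and "\<beta> \<noteq> 0" and m: "2 * pi * \<beta> = of_int m * L"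
  shows "(\<integral>\<^sup>+\<sigma>\<in>{0..2 * pi}. G (a + \<beta> * \<sigma>) \<partial>lborel)
       = ennreal (of_int \<bar>m\<bar> / \<bar>\<beta>\<bar>) * (\<integral>\<^sup>+u\<in>{0..<L}. G u \<partial>lborel)"
proof -
  define t where "t = min a (a + 2 * pi * \<beta>)"
  have len: "\<bar>2 * pi * \<beta>\<bar> = real (nat \<bar>m\<bar>) * L" using m \<open>L > 0\<close> by (simp add: abs_mult)
  define X where "X = (\<integral>\<^sup>+\<sigma>\<in>{0..2 * pi}. G (a + \<beta> * \<sigma>) \<partial>lborel)"
  have "ennreal (1 / \<bar>\<beta>\<bar>) * ennreal \<bar>\<beta>\<bar> = 1"
    using \<open>\<beta> \<noteq> 0\<close> by (simp add: ennreal_mult[symmetric])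
  then have "X = ennreal (1 / \<bar>\<beta>\<bar>) * (ennreal \<bar>\<beta>\<bar> * X)"
    by (simp only: mult.assoc[symmetric] mult_1)
  also have "ennreal \<bar>\<beta>\<bar> * X = (\<integral>\<^sup>+v. G v * indicator {0..2 * pi} ((v - a) / \<beta>) \<partial>lborel)"
    using nn_integral_real_affine[of "\<lambda>v. G v * indicator {0..2 * pi} ((v - a) / \<beta>)" \<beta> a] \<open>\<beta> \<noteq> 0\<close>
    by (simp add: X_def)
  also have "\<dots> = (\<integral>\<^sup>+v\<in>{t..t + \<bar>2 * pi * \<beta>\<bar>}. G v \<partial>lborel)"
    using affine_preimage_atLeastAtMost[OF \<open>\<beta> \<noteq> 0\<close>, of "2 * pi" _ a]
    by (intro nn_integral_cong) (simp add: t_def indicator_def mult.commute)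
  also have "\<dots> = of_nat (nat \<bar>m\<bar>) * (\<integral>\<^sup>+u\<in>{0..<L}. G u \<partial>lborel)"
    unfolding set_nn_integral_atLeastAtMost len by (rule set_nn_integral_periods[OF assms(1-3)])
  also have "ennreal (1 / \<bar>\<beta>\<bar>) * (of_nat (nat \<bar>m\<bar>) * (\<integral>\<^sup>+u\<in>{0..<L}. G u \<partial>lborel))
      = ennreal (of_int \<bar>m\<bar> / \<bar>\<beta>\<bar>) * (\<integral>\<^sup>+u\<in>{0..<L}. G u \<partial>lborel)"
    by (simp add: mult.assoc[symmetric] ennreal_of_nat_eq_real_of_nat ennreal_mult[symmetric])
  finally show ?thesis unfolding X_def .
qed

lemma Pbox_sets_pair [measurable]: "Pbox \<in> sets (borel \<Otimes>\<^sub>M borel)"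
  unfolding Pbox_def by (intro pair_measureI) auto

lemma Pbox_sets [measurable]: "Pbox \<in> sets borel"
  using Pbox_sets_pair by (simp only: borel_prod)

lemma set_nn_integral_Pbox_periodic_form:
  fixes G :: "real \<Rightarrow> ennreal"
  assumes [measurable]: "G \<in> borel_measurable borel" and per: "\<And>x. G (x + L) = G x" and "L > 0"
    and "\<beta> \<noteq> 0" and "2 * pi * \<beta> = of_int m * L"
  shows "(\<integral>\<^sup>+p\<in>Pbox. G (\<alpha> * fst p + \<beta> * snd p) \<partial>lborel)
       = ennreal (2 * pi * (of_int \<bar>m\<bar> / \<bar>\<beta>\<bar>)) * (\<integral>\<^sup>+u\<in>{0..<L}. G u \<partial>lborel)"
proof -
  let ?I = "ennreal (of_int \<bar>m\<bar> / \<bar>\<beta>\<bar>) * (\<integral>\<^sup>+u\<in>{0..<L}. G u \<partial>lborel)"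
  have M: "(\<lambda>p. G (\<alpha> * fst p + \<beta> * snd p) * indicator Pbox p) \<in> borel_measurable (lborel \<Otimes>\<^sub>M lborel)"
    by (simp add: measurable_cong_sets[OF sets_pair_measure_cong[OF sets_lborel sets_lborel] refl])
  have "(\<integral>\<^sup>+p\<in>Pbox. G (\<alpha> * fst p + \<beta> * snd p) \<partial>lborel)
      = (\<integral>\<^sup>+p. G (\<alpha> * fst p + \<beta> * snd p) * indicator Pbox p \<partial>(lborel \<Otimes>\<^sub>M lborel))"
    by (simp only: lborel_prod)
  also have "\<dots> = (\<integral>\<^sup>+\<rho>. \<integral>\<^sup>+\<sigma>. G (\<alpha> * \<rho> + \<beta> * \<sigma>) * indicator Pbox (\<rho>, \<sigma>) \<partial>lborel \<partial>lborel)"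
    using lborel.nn_integral_fst[OF M, symmetric] by simp
  also have "\<dots> = (\<integral>\<^sup>+\<rho>. ?I * indicator {0..2 * pi} \<rho> \<partial>lborel)"
  proof (rule nn_integral_cong)
    fix \<rho> :: real
    have "(\<integral>\<^sup>+\<sigma>. G (\<alpha> * \<rho> + \<beta> * \<sigma>) * indicator Pbox (\<rho>, \<sigma>) \<partial>lborel)
        = (\<integral>\<^sup>+\<sigma>\<in>{0..2 * pi}. G (\<alpha> * \<rho> + \<beta> * \<sigma>) \<partial>lborel) * indicator {0..2 * pi} \<rho>"
      by (subst nn_integral_multc[symmetric]) (auto intro!: nn_integral_cong simp: Pbox_def indicator_def)
    then show "(\<integral>\<^sup>+\<sigma>. G (\<alpha> * \<rho> + \<beta> * \<sigma>) * indicator Pbox (\<rho>, \<sigma>) \<partial>lborel) = ?I * indicator {0..2 * pi} \<rho>"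
      by (simp only: set_nn_integral_periodic_affine[OF assms])
  qed
  also have "\<dots> = ?I * emeasure lborel {0..2 * pi}"
    by (simp add: nn_integral_cmult_indicator)
  also have "\<dots> = ennreal (2 * pi) * ?I"
    by (simp add: mult.commute)
  also have "\<dots> = ennreal (2 * pi * (of_int \<bar>m\<bar> / \<bar>\<beta>\<bar>)) * (\<integral>\<^sup>+u\<in>{0..<L}. G u \<partial>lborel)"
    by (subst ennreal_mult) (simp_all add: mult.assoc)
  finally show ?thesis .
qed

definition pullback :: "real \<Rightarrow> real \<Rightarrow> (real \<Rightarrow> real) \<Rightarrow> real \<times> real \<Rightarrow> real" where
  "pullback \<alpha> \<beta> \<Theta> = (\<lambda>(\<rho>, \<sigma>). vsig (\<rho> / 2) * vsig (\<sigma> / 2) * \<Theta> (\<alpha> * \<rho> + \<beta> * \<sigma>))"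

lemma twist_pullback:
  assumes "sin (\<rho> / 2) \<noteq> 0" "sin (\<sigma> / 2) \<noteq> 0"
  shows "twist (pullback \<alpha> \<beta> \<Theta>) (\<rho>, \<sigma>) = \<Theta> (\<alpha> * \<rho> + \<beta> * \<sigma>)"
proof -
  have "twist (pullback \<alpha> \<beta> \<Theta>) (\<rho>, \<sigma>)
      = (vsig (\<rho> / 2) * vsig (\<rho> / 2)) * (vsig (\<sigma> / 2) * vsig (\<sigma> / 2)) * \<Theta> (\<alpha> * \<rho> + \<beta> * \<sigma>)"
    by (simp add: twist_def pullback_def mult_ac)
  then show ?thesis using assms by (simp add: vsig_mult_self)
qed

lemma AE_pullback_square:
  "AE p in lborel. (pullback \<alpha> \<beta> \<Theta> p)^2 = (\<Theta> (\<alpha> * fst p + \<beta> * snd p))^2"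
  using AE_sin_halves_nonzero[of 0 0]
proof eventually_elim
  case (elim p)
  obtain \<rho> \<sigma> where p: "p = (\<rho>, \<sigma>)" by (cases p)
  have "(pullback \<alpha> \<beta> \<Theta> p)^2
      = (vsig (\<rho> / 2) * vsig (\<rho> / 2)) * (vsig (\<sigma> / 2) * vsig (\<sigma> / 2)) * (\<Theta> (\<alpha> * \<rho> + \<beta> * \<sigma>))^2"
    by (simp add: p pullback_def power2_eq_square mult_ac)
  then show ?case using elim by (simp add: p vsig_mult_self)
qed

lemma borel_measurable_pullback [measurable]:
  assumes [measurable]: "\<Theta> \<in> borel_measurable borel"
  shows "pullback \<alpha> \<beta> \<Theta> \<in> borel_measurable borel"
proof -
  have "pullback \<alpha> \<beta> \<Theta> \<in> borel_measurable (borel \<Otimes>\<^sub>M borel)" unfolding pullback_def by measurable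
  then show ?thesis by (simp only: borel_prod)
qed

lemma AE_shift_of_function_of_form:
  fixes h :: "real \<Rightarrow> real"
  assumes "\<beta> \<noteq> 0" and [measurable]: "h \<in> borel_measurable borel"
    and factor: "AE p in lborel. \<psi> p = h (\<alpha> * fst p + \<beta> * snd p)"
    and shift: "AE p in lborel. \<psi> (p + v) = e * \<psi> p"
  shows "AE u in lborel. h (u + (\<alpha> * fst v + \<beta> * snd v)) = e * h u"
proof (rule AE_of_AE_linear_form[OF \<open>\<beta> \<noteq> 0\<close>, of _ \<alpha>])
  have "{u \<in> space borel. h (u + (\<alpha> * fst v + \<beta> * snd v)) = e * h u} \<in> sets borel" by measurable
  then show "{u. h (u + (\<alpha> * fst v + \<beta> * snd v)) = e * h u} \<in> sets borel" by simp
  show "AE p in lborel. h (\<alpha> * fst p + \<beta> * snd p + (\<alpha> * fst v + \<beta> * snd v)) = e * h (\<alpha> * fst p + \<beta> * snd p)"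
    using factor AE_lborel_translate[OF factor, of v] shift
  proof eventually_elim
    case (elim p)
    have "\<alpha> * fst p + \<beta> * snd p + (\<alpha> * fst v + \<beta> * snd v) = \<alpha> * fst (p + v) + \<beta> * snd (p + v)"
      by (simp add: algebra_simps)
    then have "h (\<alpha> * fst p + \<beta> * snd p + (\<alpha> * fst v + \<beta> * snd v)) = \<psi> (p + v)"
      using elim(2) by simp
    also have "\<dots> = e * h (\<alpha> * fst p + \<beta> * snd p)" using elim(1,3) by simp
    finally show ?case .
  qed
qed

lemma admissible_antiperiodic_ext:
  assumes "L > 0" and "f \<in> borel_measurable lborel" and "set_integrable lborel {0..L} (\<lambda>u. (f u)^2)"
  shows "admissible L (antiperiodic_ext L f)"
    and "AE u in lborel. u \<in> {0..L} \<longrightarrow> antiperiodic_ext L f u = f u"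
proof -
  have [measurable]: "f \<in> borel_measurable borel" using assms(2) by simp
  show eq: "AE u in lborel. u \<in> {0..L} \<longrightarrow> antiperiodic_ext L f u = f u"
    using AE_lborel_singleton[of L] by eventually_elim (auto simp: antiperiodic_ext_eq[OF \<open>L > 0\<close>])
  have "(\<integral>\<^sup>+u\<in>{0..L}. ennreal ((antiperiodic_ext L f u)^2) \<partial>lborel) = (\<integral>\<^sup>+u\<in>{0..L}. ennreal ((f u)^2) \<partial>lborel)"
    by (rule nn_integral_cong_AE) (use eq in \<open>eventually_elim, auto simp: indicator_def\<close>)
  then show "admissible L (antiperiodic_ext L f)"
    using assms(3) antiperiodic_antiperiodic_ext[OF \<open>L > 0\<close>]
    by (simp add: admissible_iff set_integrable_square_iff)
qed

lemma fixed_space_char_uminus: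
  assumes "fixed_space_char G L F"
  shows "fixed_space_char G L (\<lambda>\<Theta>. F (\<lambda>u. - \<Theta> u))"
proof -
  have image: "\<forall>\<phi>. L2P \<phi> \<and> fixed_by G \<phi> \<longrightarrow>
      (\<exists>\<Theta>. admissible L \<Theta> \<and> (AE p in lborel. p \<in> Pbox \<longrightarrow> \<phi> p = F \<Theta> p))"
    and fixed: "\<forall>\<Theta>. admissible L \<Theta> \<longrightarrow> L2P (F \<Theta>) \<and> fixed_by G (F \<Theta>)"
    and norm: "\<exists>c>0. \<forall>\<Theta>. admissible L \<Theta> \<longrightarrow> set_lebesgue_integral lborel Pbox (\<lambda>p. (F \<Theta> p)^2)
      = c * set_lebesgue_integral lborel {0..L} (\<lambda>u. (\<Theta> u)^2)"
    using assms unfolding fixed_space_char_def by simp_all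
  have neg: "admissible L (\<lambda>u. - \<Theta> u) \<longleftrightarrow> admissible L \<Theta>" for \<Theta>
    using borel_measurable_uminus_eq[of \<Theta> lborel] by (auto simp: admissible_def minus_equation_iff)
  show ?thesis
    unfolding fixed_space_char_def
  proof (intro conjI allI impI)
    fix \<phi> assume "L2P \<phi> \<and> fixed_by G \<phi>"
    then obtain \<Theta> where "admissible L \<Theta>" "AE p in lborel. p \<in> Pbox \<longrightarrow> \<phi> p = F \<Theta> p"
      using image by blast
    then show "\<exists>\<Theta>. admissible L \<Theta> \<and> (AE p in lborel. p \<in> Pbox \<longrightarrow> \<phi> p = F (\<lambda>u. - \<Theta> u) p)"
      using neg[of "\<lambda>u. - \<Theta> u"] by (intro exI[of _ "\<lambda>u. - \<Theta> u"]) simp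
  next
    fix \<Theta> assume "admissible L \<Theta>"
    then show "L2P (F (\<lambda>u. - \<Theta> u))" "fixed_by G (F (\<lambda>u. - \<Theta> u))"
      using fixed neg by blast+
  next
    obtain c where "c > 0" and c: "\<And>\<Theta>. admissible L \<Theta> \<Longrightarrow> set_lebesgue_integral lborel Pbox (\<lambda>p. (F \<Theta> p)^2)
        = c * set_lebesgue_integral lborel {0..L} (\<lambda>u. (\<Theta> u)^2)"
      using norm by blast
    have "set_lebesgue_integral lborel Pbox (\<lambda>p. (F (\<lambda>u. - \<Theta> u) p)^2)
        = c * set_lebesgue_integral lborel {0..L} (\<lambda>u. (\<Theta> u)^2)" if "admissible L \<Theta>" for \<Theta>
      using c[of "\<lambda>u. - \<Theta> u"] neg that by simp
    with \<open>c > 0\<close> show "\<exists>c>0. \<forall>\<Theta>. admissible L \<Theta> \<longrightarrow>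
        set_lebesgue_integral lborel Pbox (\<lambda>p. (F (\<lambda>u. - \<Theta> u) p)^2)
          = c * set_lebesgue_integral lborel {0..L} (\<lambda>u. (\<Theta> u)^2)"
      by blast
  qed (use assms in \<open>simp add: fixed_space_char_def\<close>)+
qed

section \<open>The fixed space of H(N,a,b)\<close>

text \<open>The form \<alpha>\<rho> + \<beta>\<sigma> is constant along the direction (a,b) of the continuous part of H(N,a,b);
  its values change by odd multiples of L under the 2\<pi>-shifts of \<rho> and \<sigma> and by an even multiple
  under the generator (0, 4\<pi>/N) of the discrete part, and these multiples generate \<int>.\<close>
locale fixed_space_setting =
  fixes a b N :: int and \<alpha> \<beta> L :: real and k\<alpha> k\<beta> kN :: int
  assumes N_pos: "N \<ge> 1" and a_nonzero: "a \<noteq> 0" and \<beta>_nonzero: "\<beta> \<noteq> 0" and L_pos: "L > 0"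
    and form_annihilates: "of_int a * \<alpha> + of_int b * \<beta> = 0"
    and period_\<alpha>: "2 * pi * \<alpha> = of_int k\<alpha> * L"
    and period_\<beta>: "2 * pi * \<beta> = of_int k\<beta> * L"
    and period_N: "4 * pi * \<beta> / of_int N = of_int kN * L"
    and odd_k\<alpha>: "odd k\<alpha>" and odd_k\<beta>: "odd k\<beta>" and even_kN: "even kN"
    and generate: "\<exists>m1 m2 m3. m1 * k\<alpha> + m2 * k\<beta> + m3 * kN = 1"
begin

lemma doubly_periodic_pullback:
  assumes "antiperiodic L \<Theta>"
  shows "doubly_periodic (pullback \<alpha> \<beta> \<Theta>)"
  unfolding doubly_periodic_def
proof (intro allI conjI)
  fix \<rho> \<sigma> :: real
  have "\<Theta> (x + 2 * pi * \<alpha>) = - \<Theta> x" "\<Theta> (x + 2 * pi * \<beta>) = - \<Theta> x" for x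
    using antiperiodic_of_int[OF assms] period_\<alpha> period_\<beta> odd_k\<alpha> odd_k\<beta> by simp_all
  moreover have "\<alpha> * (\<rho> + 2 * pi) + \<beta> * \<sigma> = (\<alpha> * \<rho> + \<beta> * \<sigma>) + 2 * pi * \<alpha>"
    "\<alpha> * \<rho> + \<beta> * (\<sigma> + 2 * pi) = (\<alpha> * \<rho> + \<beta> * \<sigma>) + 2 * pi * \<beta>"
    by (simp_all add: algebra_simps)
  ultimately show "pullback \<alpha> \<beta> \<Theta> (\<rho> + 2 * pi, \<sigma>) = pullback \<alpha> \<beta> \<Theta> (\<rho>, \<sigma>)"
    "pullback \<alpha> \<beta> \<Theta> (\<rho>, \<sigma> + 2 * pi) = pullback \<alpha> \<beta> \<Theta> (\<rho>, \<sigma>)"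
    unfolding pullback_def case_prod_conv
    by (simp_all only: vsig_half_add_2pi)
qed

definition norm_ratio :: real where
  "norm_ratio = 2 * pi * (of_int \<bar>k\<beta>\<bar> / \<bar>\<beta>\<bar>)"

lemma norm_ratio_pos: "norm_ratio > 0"
proof -
  have "k\<beta> \<noteq> 0" using odd_k\<beta> by auto
  then show ?thesis using \<beta>_nonzero by (simp add: norm_ratio_def)
qed

lemma set_nn_integral_pullback_square:
  assumes "antiperiodic L \<Theta>" and [measurable]: "\<Theta> \<in> borel_measurable borel"
  shows "(\<integral>\<^sup>+p\<in>Pbox. ennreal ((pullback \<alpha> \<beta> \<Theta> p)^2) \<partial>lborel)
    = ennreal norm_ratio * (\<integral>\<^sup>+u\<in>{0..L}. ennreal ((\<Theta> u)^2) \<partial>lborel)"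
proof -
  have "(\<integral>\<^sup>+p\<in>Pbox. ennreal ((pullback \<alpha> \<beta> \<Theta> p)^2) \<partial>lborel)
      = (\<integral>\<^sup>+p\<in>Pbox. ennreal ((\<Theta> (\<alpha> * fst p + \<beta> * snd p))^2) \<partial>lborel)"
    by (rule nn_integral_cong_AE) (use AE_pullback_square[of \<alpha> \<beta> \<Theta>] in \<open>eventually_elim, simp\<close>)
  also have "\<dots> = ennreal norm_ratio * (\<integral>\<^sup>+u\<in>{0..L}. ennreal ((\<Theta> u)^2) \<partial>lborel)"
    unfolding norm_ratio_def set_nn_integral_atLeastAtMost
    using assms(1) L_pos \<beta>_nonzero period_\<beta>
    by (intro set_nn_integral_Pbox_periodic_form) (auto simp: antiperiodic_def)
  finally show ?thesis .
qed

lemma L2P_pullback: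
  assumes "admissible L \<Theta>"
  shows "L2P (pullback \<alpha> \<beta> \<Theta>)"
proof -
  have anti: "antiperiodic L \<Theta>" and meas [measurable]: "\<Theta> \<in> borel_measurable borel"
    and "set_integrable lborel {0..L} (\<lambda>u. (\<Theta> u)^2)"
    using assms by (simp_all add: admissible_iff)
  then have "(\<integral>\<^sup>+u\<in>{0..L}. ennreal ((\<Theta> u)^2) \<partial>lborel) < \<infinity>"
    by (simp add: set_integrable_square_iff)
  then have "(\<integral>\<^sup>+p\<in>Pbox. ennreal ((pullback \<alpha> \<beta> \<Theta> p)^2) \<partial>lborel) < \<infinity>"
    by (simp add: set_nn_integral_pullback_square[OF anti meas] ennreal_mult_less_top)
  then show ?thesis
    using doubly_periodic_pullback[OF anti]
    by (simp add: L2P_def doubly_periodic_def set_integrable_square_iff[OF Pbox_sets])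
qed

lemma set_integral_pullback_square:
  assumes "admissible L \<Theta>"
  shows "set_lebesgue_integral lborel Pbox (\<lambda>p. (pullback \<alpha> \<beta> \<Theta> p)^2)
       = norm_ratio * set_lebesgue_integral lborel {0..L} (\<lambda>u. (\<Theta> u)^2)"
proof -
  have anti: "antiperiodic L \<Theta>" and meas [measurable]: "\<Theta> \<in> borel_measurable borel"
    using assms by (simp_all add: admissible_iff)
  have "set_lebesgue_integral lborel Pbox (\<lambda>p. (pullback \<alpha> \<beta> \<Theta> p)^2)
      = enn2real (\<integral>\<^sup>+p\<in>Pbox. ennreal ((pullback \<alpha> \<beta> \<Theta> p)^2) \<partial>lborel)"
    by (rule set_integral_square[OF Pbox_sets]) simp
  also have "\<dots> = norm_ratio * enn2real (\<integral>\<^sup>+u\<in>{0..L}. ennreal ((\<Theta> u)^2) \<partial>lborel)"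
    using norm_ratio_pos by (simp add: set_nn_integral_pullback_square[OF anti meas] enn2real_mult)
  also have "enn2real (\<integral>\<^sup>+u\<in>{0..L}. ennreal ((\<Theta> u)^2) \<partial>lborel)
      = set_lebesgue_integral lborel {0..L} (\<lambda>u. (\<Theta> u)^2)"
    by (rule set_integral_square[symmetric]) simp_all
  finally show ?thesis .
qed

lemma fixed_by_pullback:
  assumes "antiperiodic L \<Theta>"
  shows "fixed_by (H N a b) (pullback \<alpha> \<beta> \<Theta>)"
  unfolding fixed_by_H_iff[OF doubly_periodic_pullback[OF assms]]
proof (intro allI impI)
  fix \<theta> :: real and i :: int
  define u w where "u = of_int a * \<theta>" and "w = of_int b * \<theta> + 2 * pi * of_int i / of_int N"
  have shift: "\<alpha> * (\<rho> + 2 * u) + \<beta> * (\<sigma> + 2 * w) = (\<alpha> * \<rho> + \<beta> * \<sigma>) + of_int (kN * i) * L" for \<rho> \<sigma>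
  proof -
    have "\<alpha> * (\<rho> + 2 * u) + \<beta> * (\<sigma> + 2 * w) = (\<alpha> * \<rho> + \<beta> * \<sigma>)
        + 2 * \<theta> * (of_int a * \<alpha> + of_int b * \<beta>) + of_int i * (4 * pi * \<beta> / of_int N)"
      by (simp add: u_def w_def algebra_simps)
    then show ?thesis by (simp add: form_annihilates period_N)
  qed
  have "AE p in lborel. twist (pullback \<alpha> \<beta> \<Theta>) (fst p + 2 * u, snd p + 2 * w) = twist (pullback \<alpha> \<beta> \<Theta>) p"
    using AE_sin_halves_nonzero[of 0 0] AE_sin_halves_nonzero[of u w]
  proof eventually_elim
    case (elim p)
    obtain \<rho> \<sigma> where p: "p = (\<rho>, \<sigma>)" by (cases p)
    have "sin ((\<rho> + 2 * u) / 2) \<noteq> 0" "sin ((\<sigma> + 2 * w) / 2) \<noteq> 0"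
      using elim by (simp_all add: p add_divide_distrib)
    then have "twist (pullback \<alpha> \<beta> \<Theta>) (\<rho> + 2 * u, \<sigma> + 2 * w) = \<Theta> (\<alpha> * \<rho> + \<beta> * \<sigma>)"
      using antiperiodic_of_int[OF assms, of _ "kN * i"] even_kN by (simp add: twist_pullback shift)
    then show ?case using elim by (simp add: p twist_pullback)
  qed
  then show "AE p in lborel. twist (pullback \<alpha> \<beta> \<Theta>) (fst p + 2 * (of_int a * \<theta>),
      snd p + 2 * (of_int b * \<theta> + 2 * pi * of_int i / of_int N)) = twist (pullback \<alpha> \<beta> \<Theta>) p"
    by (simp add: u_def w_def)
qed

lemma fixed_by_pullback_nonzero:
  "\<exists>\<phi>. L2P \<phi> \<and> fixed_by (H N a b) \<phi> \<and> \<not> (AE p in lborel. p \<in> Pbox \<longrightarrow> \<phi> p = 0)"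
proof -
  define \<Theta> where "\<Theta> = antiperiodic_ext L (\<lambda>_. 1)"
  have anti: "antiperiodic L \<Theta>" unfolding \<Theta>_def by (rule antiperiodic_antiperiodic_ext[OF L_pos])
  have meas [measurable]: "\<Theta> \<in> borel_measurable borel" unfolding \<Theta>_def by simp
  have square: "(\<Theta> u)^2 = 1" for u unfolding \<Theta>_def antiperiodic_ext_def by (simp add: parity_sign_def)
  then have "(\<integral>\<^sup>+u\<in>{0..L}. ennreal ((\<Theta> u)^2) \<partial>lborel) < \<infinity>"
    using L_pos by simp
  then have "admissible L \<Theta>"
    using anti by (simp add: admissible_iff set_integrable_square_iff[OF _ meas])
  moreover have "\<not> (AE p in lborel. p \<in> Pbox \<longrightarrow> pullback \<alpha> \<beta> \<Theta> p = 0)"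
  proof
    assume "AE p in lborel. p \<in> Pbox \<longrightarrow> pullback \<alpha> \<beta> \<Theta> p = 0"
    then have "(\<integral>\<^sup>+p\<in>Pbox. ennreal ((pullback \<alpha> \<beta> \<Theta> p)^2) \<partial>lborel) = 0"
      by (intro nn_integral_0_iff_AE[THEN iffD2]) (auto elim!: eventually_mono simp: indicator_def)
    then have "ennreal norm_ratio * ennreal L = 0"
      using L_pos by (simp add: set_nn_integral_pullback_square[OF anti meas] square)
    then show False using norm_ratio_pos L_pos by (simp add: ennreal_mult[symmetric])
  qed
  ultimately show ?thesis using L2P_pullback fixed_by_pullback[OF anti] by blast
qed

lemma twist_invariant_N_shift:
  assumes "L2P \<phi>" "fixed_by (H N a b) \<phi>"
  shows "AE p in lborel. twist \<phi> (p + (0, 4 * pi / of_int N)) = twist \<phi> p"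
proof (cases "N = 1")
  case True
  have "twist \<phi> (\<rho>, \<sigma> + 4 * pi) = twist \<phi> (\<rho>, \<sigma>)" for \<rho> \<sigma>
  proof -
    have antiper: "twist \<phi> (\<rho>, \<sigma> + 2 * pi) = - twist \<phi> (\<rho>, \<sigma>)" for \<rho> \<sigma>
      using doubly_antiperiodic_twist[OF L2P_doubly_periodic[OF assms(1)]]
      unfolding doubly_antiperiodic_def by simp
    have "\<sigma> + 4 * pi = (\<sigma> + 2 * pi) + 2 * pi" by simp
    then show ?thesis by (simp only: antiper minus_minus)
  qed
  then show ?thesis using True by (simp add: split_beta plus_prod_def)
next
  case False
  then have "1 \<in> {0..N - 1}" using N_pos by simp
  then have "AE p in lborel. twist \<phi> (fst p + 2 * (of_int a * 0), snd p + 2 * (of_int b * 0 + 2 * pi * of_int 1 / of_int N))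
      = twist \<phi> p"
    using assms(2) fixed_by_H_iff[OF L2P_doubly_periodic[OF assms(1)], of N a b] by blast
  then show ?thesis by (simp add: plus_prod_def)
qed

lemma fixed_imp_function_of_form:
  assumes "L2P \<phi>" "fixed_by (H N a b) \<phi>"
  obtains h where "h \<in> borel_measurable borel"
    and "AE p in lborel. twist \<phi> p = h (\<alpha> * fst p + \<beta> * snd p)"
    and "AE u in lborel. h (u + L) = - h u"
proof -
  have per: "doubly_periodic \<phi>" by (rule L2P_doubly_periodic[OF assms(1)])
  have [measurable]: "\<phi> \<in> borel_measurable borel" using assms(1) by (simp add: L2P_def)
  have "(0::int) \<in> {0..N - 1}" using N_pos by simp
  then have "AE p in lborel. twist \<phi> (fst p + 2 * (of_int a * (t / 2)),
      snd p + 2 * (of_int b * (t / 2) + 2 * pi * of_int 0 / of_int N)) = twist \<phi> p" for t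
    using assms(2) fixed_by_H_iff[OF per, of N a b] by blast
  then have "AE p in lborel. twist \<phi> (fst p + t * of_int a, snd p + t * of_int b) = twist \<phi> p" for t
    by (simp add: mult.commute)
  with a_nonzero \<beta>_nonzero form_annihilates obtain h where h_meas: "h \<in> borel_measurable borel"
    and factor: "AE p in lborel. twist \<phi> p = h (\<alpha> * fst p + \<beta> * snd p)"
    using AE_translation_invariant_imp_function_of_form[of "twist \<phi>" "of_int a" \<beta> \<alpha> "of_int b"] by auto
  have "twist \<phi> (p + (2 * pi, 0)) = - 1 * twist \<phi> p" "twist \<phi> (p + (0, 2 * pi)) = - 1 * twist \<phi> p" for p
    using doubly_antiperiodic_twist[OF per] by (auto simp: doubly_antiperiodic_def plus_prod_def split_beta)
  then have shift_\<alpha>: "AE p in lborel. twist \<phi> (p + (2 * pi, 0)) = - 1 * twist \<phi> p"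
    and shift_\<beta>: "AE p in lborel. twist \<phi> (p + (0, 2 * pi)) = - 1 * twist \<phi> p"
    by simp_all
  have shift_N: "AE p in lborel. twist \<phi> (p + (0, 4 * pi / of_int N)) = 1 * twist \<phi> p"
    using twist_invariant_N_shift[OF assms] by simp
  have forms: "\<alpha> * fst (2 * pi, 0::real) + \<beta> * snd (2 * pi, 0::real) = of_int k\<alpha> * L"
    "\<alpha> * fst (0::real, 2 * pi) + \<beta> * snd (0::real, 2 * pi) = of_int k\<beta> * L"
    "\<alpha> * fst (0::real, 4 * pi / of_int N) + \<beta> * snd (0::real, 4 * pi / of_int N) = of_int kN * L"
    using period_\<alpha> period_\<beta> period_N by (simp_all add: mult_ac)
  have "AE u in lborel. h (u + of_int k\<alpha> * L) = parity_sign k\<alpha> * h u"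
    using AE_shift_of_function_of_form[OF \<beta>_nonzero h_meas factor shift_\<alpha>, unfolded forms] odd_k\<alpha> by simp
  moreover have "AE u in lborel. h (u + of_int k\<beta> * L) = parity_sign k\<beta> * h u"
    using AE_shift_of_function_of_form[OF \<beta>_nonzero h_meas factor shift_\<beta>, unfolded forms] odd_k\<beta> by simp
  moreover have "AE u in lborel. h (u + of_int kN * L) = parity_sign kN * h u"
    using AE_shift_of_function_of_form[OF \<beta>_nonzero h_meas factor shift_N, unfolded forms] even_kN by simp
  ultimately have "AE u in lborel. h (u + L) = - h u"
    using generate AE_antiperiodic_of_generators by blast
  then show ?thesis using that h_meas factor by simp
qed

lemma fixed_imp_pullback:
  assumes "L2P \<phi>" "fixed_by (H N a b) \<phi>"
  shows "\<exists>\<Theta>. admissible L \<Theta> \<and> (AE p in lborel. p \<in> Pbox \<longrightarrow> \<phi> p = pullback \<alpha> \<beta> \<Theta> p)"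
proof -
  obtain h where [measurable]: "h \<in> borel_measurable borel"
    and factor: "AE p in lborel. twist \<phi> p = h (\<alpha> * fst p + \<beta> * snd p)"
    and anti_AE: "AE u in lborel. h (u + L) = - h u"
    using fixed_imp_function_of_form[OF assms] by blast
  define \<Theta> where "\<Theta> = antiperiodic_ext L h"
  have anti: "antiperiodic L \<Theta>" unfolding \<Theta>_def by (rule antiperiodic_antiperiodic_ext[OF L_pos])
  have meas [measurable]: "\<Theta> \<in> borel_measurable borel" unfolding \<Theta>_def by simp
  have "AE u in lborel. \<Theta> u = h u" unfolding \<Theta>_def by (rule AE_antiperiodic_ext_eq[OF L_pos anti_AE])
  from AE_linear_form[OF \<beta>_nonzero this, of \<alpha>]
  have eq: "AE p in lborel. \<phi> p = pullback \<alpha> \<beta> \<Theta> p"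
    using AE_sin_halves_nonzero[of 0 0] factor
  proof eventually_elim
    case (elim p)
    obtain \<rho> \<sigma> where p: "p = (\<rho>, \<sigma>)" by (cases p)
    show ?case using elim vsig_halves_twist[of \<rho> \<sigma> \<phi>] by (simp add: p pullback_def)
  qed
  have "(\<integral>\<^sup>+p\<in>Pbox. ennreal ((\<phi> p)^2) \<partial>lborel) < \<infinity>"
    using assms(1) set_integrable_square_iff[OF Pbox_sets, of \<phi>] by (simp add: L2P_def)
  also have "(\<integral>\<^sup>+p\<in>Pbox. ennreal ((\<phi> p)^2) \<partial>lborel) = (\<integral>\<^sup>+p\<in>Pbox. ennreal ((pullback \<alpha> \<beta> \<Theta> p)^2) \<partial>lborel)"
    by (rule nn_integral_cong_AE) (use eq in \<open>eventually_elim, simp\<close>)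
  finally have "(\<integral>\<^sup>+u\<in>{0..L}. ennreal ((\<Theta> u)^2) \<partial>lborel) < \<infinity>"
    using norm_ratio_pos by (auto simp: set_nn_integral_pullback_square[OF anti meas] ennreal_mult_less_top)
  then have "admissible L \<Theta>"
    using anti by (simp add: admissible_iff set_integrable_square_iff)
  with eq show ?thesis by (auto elim: eventually_mono)
qed

theorem fixed_space_char_pullback: "fixed_space_char (H N a b) L (pullback \<alpha> \<beta>)"
  unfolding fixed_space_char_def
proof (intro conjI allI impI)
  fix f :: "real \<Rightarrow> real"
  assume "f \<in> borel_measurable lborel \<and> set_integrable lborel {0..L} (\<lambda>u. (f u)^2)"
  then show "\<exists>\<Theta>. admissible L \<Theta> \<and> (AE u in lborel. u \<in> {0..L} \<longrightarrow> \<Theta> u = f u)"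
    using admissible_antiperiodic_ext[OF L_pos] by blast
qed (use fixed_by_pullback_nonzero fixed_imp_pullback L2P_pullback fixed_by_pullback
       set_integral_pullback_square norm_ratio_pos in \<open>auto simp: admissible_iff\<close>)

end

lemma bezout_odd_multiples:
  fixes N A B :: int
  assumes "N \<ge> 1" "odd N" "coprime A B"
  defines "G \<equiv> gcd N B"
  shows "\<exists>m1 m2 m3. m1 * (A * (N div G)) + m2 * (B * (N div G)) + m3 * (2 * (B div G)) = 1"
proof -
  define M where "M = N div G"
  have "G > 0" using \<open>N \<ge> 1\<close> by (simp add: G_def)
  have N_eq: "N = G * M" and B_eq: "B = G * (B div G)" by (simp_all add: G_def M_def)
  obtain x y where "x * N + y * (2 * B) = gcd N (2 * B)" using bezout_int by blast
  moreover have "gcd N (2 * B) = G"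
    unfolding G_def by (rule gcd_mult_right_left_cancel) (use \<open>odd N\<close> in simp)
  ultimately have "G * (x * M + y * (2 * (B div G))) = G * 1"
    by (subst (asm) (1 2) N_eq, subst (asm) B_eq) (simp add: algebra_simps)
  then have xy: "x * M + y * (2 * (B div G)) = 1" using \<open>G > 0\<close> by simp
  obtain u v where "u * A + v * B = 1" using bezout_int[of A B] \<open>coprime A B\<close> by auto
  then have "(x * u) * (A * M) + (x * v) * (B * M) = x * M"
    by (metis mult.assoc mult.commute distrib_left mult_1)
  with xy have "(x * u) * (A * M) + (x * v) * (B * M) + y * (2 * (B div G)) = 1" by simp
  then show ?thesis unfolding M_def by blast
qed

lemma fixed_space_char_pullback_coprime:
  fixes N A B a b q0 :: int
  assumes "N \<ge> 1" "odd N" "q0 > 0" "odd A" "odd B" "coprime A B" "a \<noteq> 0" "a * A + b * B = 0"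
  shows "fixed_space_char (H N a b) (2 * pi / real_of_int (q0 * (N div gcd N B)))
    (pullback (of_int A / of_int q0) (of_int B / of_int q0))"
proof -
  define G M where "G = gcd N B" and "M = N div G"
  have "G > 0" using \<open>N \<ge> 1\<close> by (simp add: G_def)
  have N_eq: "N = G * M" and B_eq: "B = G * (B div G)" by (simp_all add: G_def M_def)
  have "0 < G * M" using N_eq \<open>N \<ge> 1\<close> by simp
  with \<open>G > 0\<close> have "M > 0" by (simp add: zero_less_mult_iff)
  have "odd M" using N_eq \<open>odd N\<close> by auto
  define L where "L = 2 * pi / real_of_int (q0 * M)"
  have reals: "real_of_int N = real_of_int G * real_of_int M"
    "real_of_int B = real_of_int G * real_of_int (B div G)"
    "real_of_int q0 > 0" "real_of_int M > 0" "real_of_int G > 0"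
    using N_eq B_eq \<open>q0 > 0\<close> \<open>M > 0\<close> \<open>G > 0\<close> by (simp_all flip: of_int_mult)
  interpret fixed_space_setting a b N "of_int A / of_int q0" "of_int B / of_int q0" L "A * M" "B * M" "2 * (B div G)"
  proof
    show "N \<ge> 1" "a \<noteq> 0" by (fact assms)+
    show "real_of_int B / real_of_int q0 \<noteq> 0" using \<open>odd B\<close> \<open>q0 > 0\<close> by auto
    show "L > 0" using reals by (simp add: L_def)
    show "real_of_int a * (real_of_int A / real_of_int q0) + real_of_int b * (real_of_int B / real_of_int q0) = 0"
      using arg_cong[OF \<open>a * A + b * B = 0\<close>, of real_of_int] by (simp add: add_divide_distrib[symmetric])
    show "2 * pi * (real_of_int A / real_of_int q0) = real_of_int (A * M) * L"
      "2 * pi * (real_of_int B / real_of_int q0) = real_of_int (B * M) * L"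
      "4 * pi * (real_of_int B / real_of_int q0) / real_of_int N = real_of_int (2 * (B div G)) * L"
      using reals by (simp_all add: L_def field_simps)
    show "odd (A * M)" "odd (B * M)" "even (2 * (B div G))" using assms \<open>odd M\<close> by simp_all
    show "\<exists>m1 m2 m3. m1 * (A * M) + m2 * (B * M) + m3 * (2 * (B div G)) = 1"
      using bezout_odd_multiples[OF assms(1,2,6)] by (simp add: G_def M_def)
  qed
  show ?thesis using fixed_space_char_pullback by (simp add: L_def M_def G_def)
qed

lemma fixed_space_char_signed_pullback:
  fixes N A B a b q0 :: int and s :: real
  assumes "N \<ge> 1" "odd N" "q0 > 0" "odd A" "odd B" "coprime A B" "a \<noteq> 0" "a * A + b * B = 0"
    and "s = 1 \<or> s = - 1"
    and "\<And>\<Theta>. F \<Theta> = pullback (of_int A / of_int q0) (of_int B / of_int q0) (\<lambda>u. s * \<Theta> u)"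
  shows "fixed_space_char (H N a b) (2 * pi / real_of_int (q0 * (N div gcd N B))) F"
proof -
  have "F = (\<lambda>\<Theta>. pullback (of_int A / of_int q0) (of_int B / of_int q0) (\<lambda>u. s * \<Theta> u))"
    using assms(10) by blast
  then show ?thesis
    using fixed_space_char_pullback_coprime[OF assms(1-8)] fixed_space_char_uminus assms(9) by auto
qed

theorem mainTheorem5:
  fixes N q0 p0 :: int
  assumes "N \<ge> 1" and "odd N"
    and "q0 > 0" and "p0 > 0" and "odd q0" and "odd p0" and "coprime q0 p0"
    and "p0 > q0 \<or> (p0 = 1 \<and> q0 = 1)"
  shows "(let q = real_of_int p0 / real_of_int q0;
              N1 = N div gcd N q0;
              N2 = N div gcd N p0
          in fixed_space_char (H N q0 p0) (2 * pi / real_of_int (q0 * N1))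
               (\<lambda>\<Theta> (\<rho>, \<sigma>). vsig (- \<rho> / 2) * vsig (\<sigma> / 2) * \<Theta> (\<sigma> - q * \<rho>))
           \<and> fixed_space_char (H N p0 q0) (2 * pi / real_of_int (q0 * N2))
               (\<lambda>\<Theta> (\<rho>, \<sigma>). vsig (- \<sigma> / 2) * vsig (\<rho> / 2) * \<Theta> (\<rho> - q * \<sigma>))
           \<and> fixed_space_char (H N (- q0) p0) (2 * pi / real_of_int (q0 * N1))
               (\<lambda>\<Theta> (\<rho>, \<sigma>). vsig (\<sigma> / 2) * vsig (\<rho> / 2) * \<Theta> (\<sigma> + q * \<rho>))
           \<and> fixed_space_char (H N (- p0) q0) (2 * pi / real_of_int (q0 * N2))
               (\<lambda>\<Theta> (\<rho>, \<sigma>). vsig (\<sigma> / 2) * vsig (\<rho> / 2) * \<Theta> (- \<rho> - q * \<sigma>)))"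
proof -
  define q where "q = real_of_int p0 / real_of_int q0"
  have q0_nonzero: "real_of_int q0 \<noteq> 0" using \<open>q0 > 0\<close> by simp
  have "fixed_space_char (H N q0 p0) (2 * pi / real_of_int (q0 * (N div gcd N q0)))
      (\<lambda>\<Theta> (\<rho>, \<sigma>). vsig (- \<rho> / 2) * vsig (\<sigma> / 2) * \<Theta> (\<sigma> - q * \<rho>))"
    by (rule fixed_space_char_signed_pullback[where A = "- p0" and B = q0 and s = "- 1"])
      (use assms q0_nonzero in \<open>auto simp: fun_eq_iff pullback_def vsig_minus q_def coprime_commute algebra_simps\<close>)
  moreover have "fixed_space_char (H N p0 q0) (2 * pi / real_of_int (q0 * (N div gcd N (- p0))))
      (\<lambda>\<Theta> (\<rho>, \<sigma>). vsig (- \<sigma> / 2) * vsig (\<rho> / 2) * \<Theta> (\<rho> - q * \<sigma>))"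
    by (rule fixed_space_char_signed_pullback[where A = q0 and B = "- p0" and s = "- 1"])
      (use assms q0_nonzero in \<open>auto simp: fun_eq_iff pullback_def vsig_minus q_def algebra_simps\<close>)
  moreover have "fixed_space_char (H N (- q0) p0) (2 * pi / real_of_int (q0 * (N div gcd N q0)))
      (\<lambda>\<Theta> (\<rho>, \<sigma>). vsig (\<sigma> / 2) * vsig (\<rho> / 2) * \<Theta> (\<sigma> + q * \<rho>))"
    by (rule fixed_space_char_signed_pullback[where A = p0 and B = q0 and s = 1])
      (use assms q0_nonzero in \<open>auto simp: fun_eq_iff pullback_def q_def coprime_commute algebra_simps\<close>)
  moreover have "fixed_space_char (H N (- p0) q0) (2 * pi / real_of_int (q0 * (N div gcd N (- p0))))
      (\<lambda>\<Theta> (\<rho>, \<sigma>). vsig (\<sigma> / 2) * vsig (\<rho> / 2) * \<Theta> (- \<rho> - q * \<sigma>))"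
    by (rule fixed_space_char_signed_pullback[where A = "- q0" and B = "- p0" and s = 1])
      (use assms q0_nonzero in \<open>auto simp: fun_eq_iff pullback_def q_def algebra_simps\<close>)
  ultimately show ?thesis unfolding Let_def q_def gcd_neg2 by blast
qed

end
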